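(* For all basis elements $u,v$ of $H$ (hence, by linearity, for all $u,v\in H$), $$Z(u)\,Z(v)=Z(u*v).$$
   Context: $\mathbb P$ denotes the positive and $\mathbb N$ the nonnegative integers. Let $X=\{x_i:i\in\mathbb P\}$ be commuting indeterminates. GSym. $\mathrm{GSym}\subseteq\mathbb Q[[X]]$ is the $\mathbb Q$-span of the series $\widehat M_{\binom{\gamma}{\mu}}=\sum_{0<i_1<\cdots<i_m}i_1^{\mu_1}\cdots i_m^{\mu_m}x_{i_1}^{\gamma_1}\cdots x_{i_m}^{\gamma_m}$. Here $\gamma\in\mathbb N^m$ with $m=0$ or $\gamma_m>0$, and $\mu\in\mathbb N^m$. It is a subalgebra. The algebra $H$. $H$ is the quasi-shuffle algebra over $\mathbb Q$ with basis the matrices $\binom{\alpha}{\beta}=\binom{\alpha_1,\dots,\alpha_k}{\beta_1,\dots,\beta_k}$ with $\alpha\in\mathbb N^k$, $\beta\in\mathbb P^k$, $k\ge0$. Write $a_i$ for the $i$-th column. The product is determined by: the empty matrix $\emptyset$ is the unit, and $$a*b=(a_1,(a_2,\dots,a_m)*b)+(b_1,a*(b_2,\dots,b_n))+(a_1+b_1,(a_2,\dots,a_m)*(b_2,\dots,b_n)),$$ where columns are added componentwise and $(c,\sum\lambda_uu)=\sum\lambda_u(c,u)$. Regularization. $\phi\binom{\alpha}{\beta}\in\mathrm{GSym}[t][z^{-1},z]]$ is obtained from $$\sum_{0<i_1<\cdots<i_k}x_{i_1}^{\alpha_1}\cdots x_{i_k}^{\alpha_k}e^{(i_1+t)\beta_1z}\cdots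 e^{(i_k+t)\beta_kz}$$ as follows. For $t\ge0$ and $\mathrm{Re}(z)<0$, the coefficient of each $X$-monomial converges absolutely. It is expanded as a Laurent series in $z$ with coefficients in $\mathbb Q[t]$, and powers of $z$ and $t$ are collected. The resulting map $\phi:H\to\mathrm{GSym}[t][z^{-1},z]]$ is an algebra homomorphism. Renormalization. Let $P$ be the projection onto the polar part, $P(\sum_{n\ge m}a_nz^n)=\sum_{n<0}a_nz^n$. Set $\phi_-(\emptyset)=\phi_+(\emptyset)=1$. For $k\ge1$ define recursively $$\phi_-\tbinom{\alpha}{\beta}=-P\Big(\phi\tbinom{\alpha}{\beta}+\sum_{i=1}^{k-1}\phi\tbinom{\alpha_1,\dots,\alpha_i}{\beta_1,\dots,\beta_i}\phi_-\tbinom{\alpha_{i+1},\dots,\alpha_k}{\beta_{i+1},\dots,\beta_k}\Big),$$ $$\phi_+\tbinom{\alpha}{\beta}=(\mathrm{id}-P)\Big(\phi\tbinom{\alpha}{\beta}+\sum_{i=1}^{k-1}\phi\tbinom{\alpha_1,\dots,\alpha_i}{\beta_1,\dots,\beta_i}\phi_-\tbinom{\alpha_{i+1},\dots,\alpha_k}{\beta_{i+1},\dots,\beta_k}\Big).$$ These values lie in $\mathrm{GSym}[t][[z]]$. The directional quasisymmetric function is $Z\binom{\alpha}{\beta}:=\phi_+\binom{\alpha}{\beta}\big|_{z=0}\in\mathrm{GSym}[t]$. $Z$ is extended linearly to $H$. *)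

theory Defs
  imports "HOL-Complex_Analysis.Complex_Analysis" "HOL-Library.Poly_Mapping"
    "HOL-Computational_Algebra.Polynomial"
begin

text \<open>X-monomials: finitely supported exponent vectors (variable x_i for index i).
  Elements of Q[[X]][t] are represented by their coefficient functions
  (X-monomial, power of t) to rational number.\<close>
type_synonym mono = "nat \<Rightarrow>\<^sub>0 nat"
type_synonym xt = "mono \<Rightarrow> nat \<Rightarrow> rat"

text \<open>Laurent series in z with coefficients in Q[[X]][t]: z-power to coefficient.\<close>
type_synonym lser = "int \<Rightarrow> xt"

definition xt_one :: xt where
  "xt_one m a = (if m = 0 \<and> a = 0 then 1 else 0)"

definition xt_mul :: "xt \<Rightarrow> xt \<Rightarrow> xt" where
  "xt_mul f g m a = (\<Sum>p\<in>{p. fst p + snd p = m}. \<Sum>b\<le>a. f (fst p) b * g (snd p) (a - b))"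

definition lser_one :: lser where
  "lser_one n = (if n = 0 then xt_one else (\<lambda>_ _. 0))"

text \<open>Product of Laurent series (whose z-supports are bounded below, so the sum is finite).\<close>
definition lser_mul :: "lser \<Rightarrow> lser \<Rightarrow> lser" where
  "lser_mul F G n m a =
     (\<Sum>i\<in>{i. F i \<noteq> (\<lambda>_ _. 0) \<and> G (n - i) \<noteq> (\<lambda>_ _. 0)}. xt_mul (F i) (G (n - i)) m a)"

definition lser_add :: "lser \<Rightarrow> lser \<Rightarrow> lser" where
  "lser_add F G n m a = F n m a + G n m a"

definition polar :: "lser \<Rightarrow> lser" where
  "polar F n = (if n < 0 then F n else (\<lambda>_ _. 0))"

text \<open>A basis element (alpha over beta) is the list of its columns (alpha_i, beta_i).\<close>
type_synonym col = "nat \<times> nat"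
type_synonym word = "col list"

definition is_basis :: "word \<Rightarrow> bool" where
  "is_basis w \<longleftrightarrow> (\<forall>c\<in>set w. snd c > 0)"

definition col_add :: "col \<Rightarrow> col \<Rightarrow> col" where
  "col_add a b = (fst a + fst b, snd a + snd b)"

text \<open>Quasi-shuffle product of basis elements, as a list of basis elements
  (their formal sum, with multiplicity).\<close>
fun qsh :: "word \<Rightarrow> word \<Rightarrow> word list" where
  "qsh [] v = [v]"
| "qsh u [] = [u]"
| "qsh (a # u) (b # v) =
     map ((#) a) (qsh u (b # v)) @ map ((#) b) (qsh (a # u) v) @ map ((#) (col_add a b)) (qsh u v)"

definition tuple_mono :: "word \<Rightarrow> nat list \<Rightarrow> mono" where
  "tuple_mono w is = (\<Sum>j<length w. Poly_Mapping.single (is ! j) (fst (w ! j)))"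

definition tuples :: "word \<Rightarrow> mono \<Rightarrow> nat list set" where
  "tuples w m = {is. length is = length w \<and> sorted_wrt (<) is \<and> (\<forall>i\<in>set is. 0 < i)
                      \<and> tuple_mono w is = m}"

text \<open>Coefficient of the X-monomial m in the generating series, as a function of
  t (real, t \<ge> 0) and z (complex, Re z < 0).\<close>
definition phi_fun :: "word \<Rightarrow> mono \<Rightarrow> real \<Rightarrow> complex \<Rightarrow> complex" where
  "phi_fun w m t z =
     (\<Sum>\<^sub>\<infinity>is\<in>tuples w m.
        \<Prod>j<length w. exp ((of_nat (is ! j) + of_real t) * of_nat (snd (w ! j)) * z))"

definition has_laurent_expansion_left :: "(complex \<Rightarrow> complex) \<Rightarrow> complex fls \<Rightarrow> bool" where
  "has_laurent_expansion_left f F \<longleftrightarrow>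
     fls_conv_radius F > 0 \<and> eventually (\<lambda>z. eval_fls F z = f z) (at 0 within {z. Re z < 0})"

definition laurent_coeff :: "(complex \<Rightarrow> complex) \<Rightarrow> int \<Rightarrow> complex" where
  "laurent_coeff f n = fls_nth (THE F. has_laurent_expansion_left f F) n"

text \<open>The coefficient of z^n (for the X-monomial m) is a polynomial in t with rational coefficients.\<close>
definition phi_poly :: "word \<Rightarrow> mono \<Rightarrow> int \<Rightarrow> rat poly" where
  "phi_poly w m n = (THE p. \<forall>t\<ge>0. laurent_coeff (phi_fun w m t) n
                                    = complex_of_real (poly (map_poly real_of_rat p) t))"

definition phi :: "word \<Rightarrow> lser" where
  "phi w n m a = coeff (phi_poly w m n) a"

function phi_minus :: "word \<Rightarrow> lser" where
  "phi_minus [] = lser_one"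
| "phi_minus (c # w) =
     (let u = c # w;
          S = (\<lambda>n m a. phi u n m a
                 + (\<Sum>i\<in>{1..<length u}. lser_mul (phi (take i u)) (phi_minus (drop i u)) n m a))
      in (\<lambda>n m a. - polar S n m a))"
  by pat_completeness auto
termination
  by (relation "Wellfounded.measure length") auto

definition renorm_sum :: "word \<Rightarrow> lser" where
  "renorm_sum u = (\<lambda>n m a. phi u n m a
                 + (\<Sum>i\<in>{1..<length u}. lser_mul (phi (take i u)) (phi_minus (drop i u)) n m a))"

definition phi_plus :: "word \<Rightarrow> lser" where
  "phi_plus u = (if u = [] then lser_one
                 else (\<lambda>n. if n < 0 then (\<lambda>_ _. 0) else renorm_sum u n))"

definition Zq :: "word \<Rightarrow> xt" where
  "Zq u = phi_plus u 0"

definition Zsum :: "word list \<Rightarrow> xt" where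
  "Zsum ws m a = (\<Sum>w\<leftarrow>ws. Zq w m a)"

end

theory Submission
  imports Defs
begin

text \<open>
  On basis elements the regularization \<open>\<phi>\<close> is multiplicative for the quasi-shuffle product,
  and the Birkhoff factors of such a character are again characters; taking the constant term
  of the regular factor \<open>\<phi>\<^sub>+\<close> gives the claim.

  For fixed \<open>z\<close> with \<open>Re z < 0\<close>, every \<open>X\<close>-coefficient of the generating series is
  \<open>exp (t B z)\<close>, with \<open>B\<close> the sum of the \<open>\<beta>\<^sub>i\<close>, times a sum over increasing index tuples. Truncating the indices at \<open>N\<close> turns
  the product of two such sums into the quasi-shuffle sum, the three kinds of terms
  corresponding to the first indices of the factors comparing as \<open><\<close>, \<open>>\<close> or \<open>=\<close>; letting
  \<open>N \<rightarrow> \<infinity>\<close> gives the identity for the series. Summing geometric tails shows that these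
  functions have Laurent expansions at 0 with rational coefficients and a pole of order at most
  the length of the word, whose coefficients are polynomials in \<open>t\<close>; by uniqueness of Laurent
  expansions the identity passes to \<open>\<phi>\<close>.

  The Birkhoff factors are characters by induction on the total length: deconcatenation is
  compatible with the quasi-shuffle product, so the defects of \<open>\<phi>\<^sub>+\<close> and \<open>\<phi>\<^sub>-\<close> coincide;
  the first has no pole and the second is purely polar, so both vanish.
\<close>

unbundle fps_syntax

section \<open>Formal power series in infinitely many variables\<close>

lemma finite_lookup_le:
  fixes m :: "'k \<Rightarrow>\<^sub>0 nat"
  shows "finite {x. \<forall>k. Poly_Mapping.lookup x k \<le> Poly_Mapping.lookup m k}"
proof -
  let ?D = "{x. \<forall>k. Poly_Mapping.lookup x k \<le> Poly_Mapping.lookup m k}"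
  let ?r = "\<lambda>x. restrict (Poly_Mapping.lookup x) (Poly_Mapping.keys m)"
  have "inj_on ?r ?D"
  proof (rule inj_onI)
    fix x y assume "x \<in> ?D" "y \<in> ?D" and r: "?r x = ?r y"
    show "x = y"
    proof (rule poly_mapping_eqI)
      fix k show "Poly_Mapping.lookup x k = Poly_Mapping.lookup y k"
      proof (cases "k \<in> Poly_Mapping.keys m")
        case False
        then show ?thesis
          using \<open>x \<in> ?D\<close> \<open>y \<in> ?D\<close> by (simp add: in_keys_iff) (metis le_zero_eq)
      qed (use r in \<open>metis restrict_apply'\<close>)
    qed
  qed
  moreover have "?r ` ?D \<subseteq> PiE (Poly_Mapping.keys m) (\<lambda>k. {..Poly_Mapping.lookup m k})"
    by auto
  then have "finite (?r ` ?D)"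
    by (rule finite_subset) (simp add: finite_PiE)
  ultimately show ?thesis
    using finite_imageD by blast
qed

definition mono_splits :: "('k \<Rightarrow>\<^sub>0 nat) \<Rightarrow> (('k \<Rightarrow>\<^sub>0 nat) \<times> ('k \<Rightarrow>\<^sub>0 nat)) set" where
  "mono_splits m = {p. fst p + snd p = m}"

lemma finite_mono_splits [simp]: "finite (mono_splits m)"
proof -
  let ?D = "{x. \<forall>k. Poly_Mapping.lookup x k \<le> Poly_Mapping.lookup m k}"
  have "mono_splits m \<subseteq> ?D \<times> ?D"
    by (auto simp: mono_splits_def Poly_Mapping.lookup_add)
  then show ?thesis
    by (rule finite_subset) (simp add: finite_lookup_le)
qed

lemma mono_splits_fst_eq:
  "{p \<in> mono_splits m. fst p = x} = (if \<exists>y. m = x + y then {(x, m - x)} else {})"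
  by (auto simp: mono_splits_def)

typedef ('k, 'a) mps = "UNIV :: (('k \<Rightarrow>\<^sub>0 nat) \<Rightarrow> 'a) set"
  morphisms mps_nth Abs_mps
  by auto

setup_lifting type_definition_mps

lemma mps_eqI: "(\<And>m. mps_nth f m = mps_nth g m) \<Longrightarrow> f = g"
  by (metis mps_nth_inject ext)

definition mps_monom :: "('k \<Rightarrow>\<^sub>0 nat) \<Rightarrow> 'a::zero \<Rightarrow> ('k, 'a) mps" where
  "mps_monom x c = Abs_mps (\<lambda>m. if m = x then c else 0)"

lemma mps_nth_monom [simp]: "mps_nth (mps_monom x c) m = (if m = x then c else 0)"
  by (simp add: mps_monom_def Abs_mps_inverse)

instantiation mps :: (type, comm_ring_1) comm_ring_1
begin

lift_definition zero_mps :: "('a, 'b) mps" is "\<lambda>_. 0" .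
lift_definition one_mps :: "('a, 'b) mps" is "\<lambda>m. if m = 0 then 1 else 0" .
lift_definition plus_mps :: "('a, 'b) mps \<Rightarrow> ('a, 'b) mps \<Rightarrow> ('a, 'b) mps" is
  "\<lambda>f g m. f m + g m" .
lift_definition minus_mps :: "('a, 'b) mps \<Rightarrow> ('a, 'b) mps \<Rightarrow> ('a, 'b) mps" is
  "\<lambda>f g m. f m - g m" .
lift_definition uminus_mps :: "('a, 'b) mps \<Rightarrow> ('a, 'b) mps" is "\<lambda>f m. - f m" .
lift_definition times_mps :: "('a, 'b) mps \<Rightarrow> ('a, 'b) mps \<Rightarrow> ('a, 'b) mps" is
  "\<lambda>f g m. \<Sum>p\<in>mono_splits m. f (fst p) * g (snd p)" .

lemma mps_nth_monom_mult:
  "mps_nth (mps_monom x c * F) m = (if \<exists>y. m = x + y then c * mps_nth F (m - x) else 0)"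
proof -
  have "mps_nth (mps_monom x c * F) m
      = (\<Sum>p\<in>{p \<in> mono_splits m. fst p = x}. c * mps_nth F (snd p))"
    unfolding times_mps.rep_eq sum.inter_filter[OF finite_mono_splits] by (intro sum.cong) auto
  then show ?thesis
    by (simp add: mono_splits_fst_eq)
qed

instance
proof
  fix a b c :: "('a, 'b) mps"
  show "a * b * c = a * (b * c)"
  proof (rule mps_eqI)
    fix m
    have "mps_nth (a * b * c) m
        = (\<Sum>(p, q)\<in>Sigma (mono_splits m) (\<lambda>p. mono_splits (fst p)).
             mps_nth a (fst q) * mps_nth b (snd q) * mps_nth c (snd p))"
      by (simp add: times_mps.rep_eq sum_distrib_right sum.Sigma)
    also have "\<dots> = (\<Sum>(p, q)\<in>Sigma (mono_splits m) (\<lambda>p. mono_splits (snd p)).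
             mps_nth a (fst p) * (mps_nth b (fst q) * mps_nth c (snd q)))"
      by (rule sum.reindex_bij_witness[where i = "\<lambda>((x, _), (y, z)). ((x + y, z), (x, y))"
            and j = "\<lambda>((_, z), (x, y)). ((x, y + z), (y, z))"])
         (auto simp: mono_splits_def add.assoc mult.assoc)
    also have "\<dots> = mps_nth (a * (b * c)) m"
      by (simp add: times_mps.rep_eq sum_distrib_left sum.Sigma)
    finally show "mps_nth (a * b * c) m = mps_nth (a * (b * c)) m" .
  qed
  show "a * b = b * a"
    by (rule mps_eqI, unfold times_mps.rep_eq,
        rule sum.reindex_bij_witness[where i = prod.swap and j = prod.swap])
       (auto simp: mono_splits_def add.commute mult.commute)
  have one: "1 = mps_monom 0 (1::'b)"
    by (rule mps_eqI) (simp add: one_mps.rep_eq)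
  show "1 * a = a"
    by (rule mps_eqI) (simp add: one mps_nth_monom_mult)
  show "(a + b) * c = a * c + b * c"
    by transfer (simp add: distrib_right sum.distrib)
  show "0 + a = a" by transfer simp
  show "a + b + c = a + (b + c)" by transfer (simp add: add.assoc)
  show "a + b = b + a" by transfer (simp add: add.commute)
  show "- a + a = 0" by transfer simp
  show "a - b = a + - b" by transfer simp
  show "(0::('a, 'b) mps) \<noteq> 1"
  proof
    assume "(0::('a, 'b) mps) = 1"
    then have "mps_nth (0::('a, 'b) mps) 0 = mps_nth 1 0"
      by simp
    then show False
      by (simp add: zero_mps.rep_eq one_mps.rep_eq)
  qed
qed

end

lemma mps_nth_sum: "mps_nth (\<Sum>x\<in>A. f x) m = (\<Sum>x\<in>A. mps_nth (f x) m)"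
  by (induction A rule: infinite_finite_induct) (auto simp: plus_mps.rep_eq zero_mps.rep_eq)

lemma mps_nth_sum_list: "mps_nth (\<Sum>x\<leftarrow>xs. f x) m = (\<Sum>x\<leftarrow>xs. mps_nth (f x) m)"
  by (induction xs) (auto simp: plus_mps.rep_eq zero_mps.rep_eq)

lemma mps_monom_mult_monom: "mps_monom x c * mps_monom y d = mps_monom (x + y) (c * d)"
  by (rule mps_eqI) (auto simp: mps_nth_monom_mult)

section \<open>Polar parts and the Birkhoff decomposition\<close>

definition fls_polar :: "'a::ring_1 fls \<Rightarrow> 'a fls" where
  "fls_polar F = F - fps_to_fls (fls_regpart F)"

lemma fls_polar_nth [simp]: "fls_polar F $$ n = (if n < 0 then F $$ n else 0)"
  by (simp add: fls_polar_def)

lemma fls_polar_add: "fls_polar (F + G) = fls_polar F + fls_polar G"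
  by (simp add: fls_eq_iff)

lemma fls_polar_diff: "fls_polar (F - G) = fls_polar F - fls_polar G"
  by (simp add: fls_eq_iff)

lemma fls_polar_uminus: "fls_polar (- F) = - fls_polar F"
  by (simp add: fls_eq_iff)

lemma fls_polar_sum_list: "fls_polar (\<Sum>x\<leftarrow>xs. f x) = (\<Sum>x\<leftarrow>xs. fls_polar (f x))"
  by (induction xs) (simp_all add: fls_polar_add fls_eq_iff)

lemma fls_nth_sum_list: "(\<Sum>x\<leftarrow>xs. f x) $$ n = (\<Sum>x\<leftarrow>xs. f x $$ n)"
  by (induction xs) simp_all

lemma fls_mult_nth_bounds:
  fixes F G :: "'a::comm_ring_1 fls"
  assumes "\<And>i. i < a \<Longrightarrow> F $$ i = 0" and "\<And>i. i < b \<Longrightarrow> G $$ i = 0"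
  shows "(F * G) $$ n = (\<Sum>i=a..n-b. F $$ i * G $$ (n - i))"
proof (cases "F = 0 \<or> G = 0")
  case False
  then have "a \<le> fls_subdegree F" "b \<le> fls_subdegree G"
    using assms by (auto intro!: fls_subdegree_geI)
  then show ?thesis
    unfolding fls_times_nth(2)
    by (intro sum.mono_neutral_left) auto
qed auto

lemma fls_polar_mult_regular:
  fixes F G :: "'a::comm_ring_1 fls"
  assumes "\<And>n. n < 0 \<Longrightarrow> F $$ n = 0" and "\<And>n. n < 0 \<Longrightarrow> G $$ n = 0"
  shows "fls_polar (F * G) = 0"
  by (simp add: fls_eq_iff fls_mult_nth_bounds[where a = 0 and b = 0, OF assms])

lemma fls_polar_mult_polar:
  fixes F G :: "'a::comm_ring_1 fls"
  shows "fls_polar (fls_polar F * fls_polar G) = fls_polar F * fls_polar G"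
proof (rule fls_eqI)
  fix n :: int
  show "fls_polar (fls_polar F * fls_polar G) $$ n = (fls_polar F * fls_polar G) $$ n"
  proof (cases "n < 0")
    case False
    have "(fls_polar F * fls_polar G) $$ n
        = (\<Sum>i=fls_subdegree (fls_polar F)..n - fls_subdegree (fls_polar G).
             fls_polar F $$ i * fls_polar G $$ (n - i))"
      by (rule fls_times_nth(2))
    also have "\<dots> = 0"
      using False by (intro sum.neutral) auto
    finally show ?thesis
      using False by simp
  qed simp
qed

lemma qsh_Nil_right [simp]: "qsh u [] = [u]"
  by (cases u) auto

lemma Nil_in_set_qsh: "[] \<in> set (qsh u v) \<Longrightarrow> u = [] \<and> v = []"
  by (induction u v rule: qsh.induct) auto

lemma is_basis_qsh: "is_basis u \<Longrightarrow> is_basis v \<Longrightarrow> w \<in> set (qsh u v) \<Longrightarrow> is_basis w"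
proof (induction u v arbitrary: w rule: qsh.induct)
  case (3 a u b v)
  have u: "is_basis u" and v: "is_basis v" and a: "0 < snd a" and b: "0 < snd b"
    using "3.prems"(1,2) by (simp_all add: is_basis_def)
  from "3.prems"(3) consider
      (left) w' where "w = a # w'" "w' \<in> set (qsh u (b # v))"
    | (right) w' where "w = b # w'" "w' \<in> set (qsh (a # u) v)"
    | (both) w' where "w = col_add a b # w'" "w' \<in> set (qsh u v)"
    by auto
  then show ?case
  proof cases
    case left
    then show ?thesis
      using "3.IH"(1)[OF u "3.prems"(2)] a by (simp add: is_basis_def)
  next
    case right
    then show ?thesis
      using "3.IH"(2)[OF "3.prems"(1) v] b by (simp add: is_basis_def)
  next
    case both
    then show ?thesis
      using "3.IH"(3)[OF u v] a by (simp add: is_basis_def col_add_def)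
  qed
qed simp_all

lemma is_basis_take: "is_basis u \<Longrightarrow> is_basis (take i u)"
  unfolding is_basis_def by (meson in_set_takeD)

lemma is_basis_drop: "is_basis u \<Longrightarrow> is_basis (drop i u)"
  unfolding is_basis_def by (meson in_set_dropD)

abbreviation qsum :: "(word \<Rightarrow> 'a::comm_monoid_add) \<Rightarrow> word \<Rightarrow> word \<Rightarrow> 'a" where
  "qsum f u v \<equiv> \<Sum>w\<leftarrow>qsh u v. f w"

lemma sum_split_Cons:
  "(\<Sum>i\<le>length (c # w). f (take i (c # w)) * g (drop i (c # w)))
   = f [] * g (c # w) + (\<Sum>i\<le>length w. f (c # take i w) * g (drop i w))"
  by (simp only: length_Cons sum.atMost_Suc_shift) simp

text \<open>Deconcatenation is multiplicative for the quasi-shuffle product.\<close>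
lemma qsum_deconcatenation:
  fixes f g :: "word \<Rightarrow> 'a::comm_ring_1"
  shows "(\<Sum>w\<leftarrow>qsh u v. \<Sum>i\<le>length w. f (take i w) * g (drop i w))
       = (\<Sum>i\<le>length u. \<Sum>j\<le>length v.
            qsum f (take i u) (take j v) * qsum g (drop i u) (drop j v))"
proof (induction u v arbitrary: f rule: qsh.induct)
  case (3 a u b v)
  let ?D = "\<lambda>f w. \<Sum>i\<le>length w. f (take i w) * g (drop i w)"
  have "(\<Sum>w\<leftarrow>qsh (a # u) (b # v). ?D f w)
      = (\<Sum>w\<leftarrow>qsh u (b # v). ?D f (a # w)) + (\<Sum>w\<leftarrow>qsh (a # u) v. ?D f (b # w))
        + (\<Sum>w\<leftarrow>qsh u v. ?D f (col_add a b # w))"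
    by (simp add: comp_def)
  also have "\<dots> = f [] * qsum g (a # u) (b # v)
        + (\<Sum>w\<leftarrow>qsh u (b # v). ?D (\<lambda>x. f (a # x)) w)
        + (\<Sum>w\<leftarrow>qsh (a # u) v. ?D (\<lambda>x. f (b # x)) w)
        + (\<Sum>w\<leftarrow>qsh u v. ?D (\<lambda>x. f (col_add a b # x)) w)"
    unfolding sum_split_Cons by (simp add: sum_list_addf sum_list_const_mult comp_def algebra_simps)
  also have "\<dots> = (\<Sum>i\<le>length (a # u). \<Sum>j\<le>length (b # v).
      qsum f (take i (a # u)) (take j (b # v)) * qsum g (drop i (a # u)) (drop j (b # v)))"
    unfolding "3.IH"(1)[of "\<lambda>x. f (a # x)"] "3.IH"(2)[of "\<lambda>x. f (b # x)"]
      "3.IH"(3)[of "\<lambda>x. f (col_add a b # x)"]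
    by (simp only: length_Cons sum.atMost_Suc_shift take_Suc_Cons drop_Suc_Cons take_0 drop_0
        qsh.simps(1,3) qsh_Nil_right list.map map_append sum_list_append sum_list.Cons sum_list.Nil
        add_0_right distrib_right sum.distrib)
       (simp add: algebra_simps comp_def)
  finally show ?case .
qed simp_all

lemma sum_sum_atMost_eq_0_0:
  fixes h :: "nat \<Rightarrow> nat \<Rightarrow> 'a::comm_monoid_add"
  assumes "\<And>i j. i \<noteq> 0 \<or> j \<noteq> 0 \<Longrightarrow> h i j = 0"
  shows "(\<Sum>i\<le>n. \<Sum>j\<le>m. h i j) = h 0 0"
proof -
  have "(\<Sum>j\<le>m. h i j) = (if i = 0 then h 0 0 else 0)" for i
  proof -
    have "(\<Sum>j\<le>m. h i j) = (\<Sum>j\<le>m. if j = 0 then (if i = 0 then h 0 0 else 0) else 0)"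
      using assms by (intro sum.cong) auto
    then show ?thesis
      by simp
  qed
  then show ?thesis
    by simp
qed

function counterterm :: "(word \<Rightarrow> 'a::comm_ring_1 fls) \<Rightarrow> word \<Rightarrow> 'a fls" where
  "counterterm F [] = 1"
| "counterterm F (c # w) = - fls_polar (F (c # w) +
      (\<Sum>i\<in>{1..<length (c # w)}. F (take i (c # w)) * counterterm F (drop i (c # w))))"
  by pat_completeness auto
termination
  by (relation "Wellfounded.measure (\<lambda>(F, w). length w)") auto

definition bogoliubov :: "(word \<Rightarrow> 'a::comm_ring_1 fls) \<Rightarrow> word \<Rightarrow> 'a fls" where
  "bogoliubov F u = F u + (\<Sum>i\<in>{1..<length u}. F (take i u) * counterterm F (drop i u))"

definition renormalized :: "(word \<Rightarrow> 'a::comm_ring_1 fls) \<Rightarrow> word \<Rightarrow> 'a fls" where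
  "renormalized F u = (if u = [] then 1 else bogoliubov F u + counterterm F u)"

lemma counterterm_eq: "u \<noteq> [] \<Longrightarrow> counterterm F u = - fls_polar (bogoliubov F u)"
  by (cases u) (simp_all add: bogoliubov_def)

lemma renormalized_nth_neg: "n < 0 \<Longrightarrow> renormalized F u $$ n = 0"
  by (simp add: renormalized_def counterterm_eq)

lemma renormalized_eq_sum:
  assumes "F [] = 1"
  shows "renormalized F u = (\<Sum>i\<le>length u. F (take i u) * counterterm F (drop i u))"
proof (cases u)
  case (Cons c w)
  have "{..length u} = insert 0 (insert (length u) {1..<length u})"
    using Cons by auto
  then show ?thesis
    using Cons assms by (simp add: renormalized_def bogoliubov_def algebra_simps)
qed (simp add: renormalized_def assms)

text \<open>Expanding both products by \<open>renormalized_eq_sum\<close> and \<open>qsum_deconcatenation\<close>, all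
  terms but the one for the empty prefixes cancel.\<close>
lemma renormalized_defect_eq_counterterm_defect:
  fixes F :: "word \<Rightarrow> 'a::comm_ring_1 fls"
  assumes F_Nil: "F [] = 1"
    and F_mult: "\<And>i j. F (take i u) * F (take j v) = qsum F (take i u) (take j v)"
    and C_mult: "\<And>i j. i \<noteq> 0 \<or> j \<noteq> 0 \<Longrightarrow> counterterm F (drop i u) * counterterm F (drop j v)
      = qsum (counterterm F) (drop i u) (drop j v)"
  shows "renormalized F u * renormalized F v - qsum (renormalized F) u v
    = counterterm F u * counterterm F v - qsum (counterterm F) u v"
proof -
  let ?C = "counterterm F"
  let ?s = "\<lambda>i j. F (take i u) * F (take j v) * (?C (drop i u) * ?C (drop j v))"
  let ?t = "\<lambda>i j. qsum F (take i u) (take j v) * qsum ?C (drop i u) (drop j v)"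
  have "(\<Sum>i\<le>length u. \<Sum>j\<le>length v. ?s i j - ?t i j) = ?s 0 0 - ?t 0 0"
    by (rule sum_sum_atMost_eq_0_0) (simp add: F_mult C_mult)
  then show ?thesis
    unfolding renormalized_eq_sum[where F = F, OF F_Nil] qsum_deconcatenation sum_product
    by (simp add: sum_subtractf F_Nil algebra_simps)
qed

text \<open>The defect of \<open>renormalized F\<close> has no polar part, while that of \<open>counterterm F\<close> is
  purely polar.\<close>
lemma counterterm_mult_of_defect_eq:
  fixes F :: "word \<Rightarrow> 'a::comm_ring_1 fls"
  assumes "u \<noteq> []" "v \<noteq> []"
    and defect: "renormalized F u * renormalized F v - qsum (renormalized F) u v
      = counterterm F u * counterterm F v - qsum (counterterm F) u v"
  shows "counterterm F u * counterterm F v = qsum (counterterm F) u v"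
proof -
  let ?C = "counterterm F" and ?R = "renormalized F" and ?B = "bogoliubov F"
  have nonempty: "w \<noteq> []" if "w \<in> set (qsh u v)" for w
    using that assms(1,2) Nil_in_set_qsh by blast
  have "qsum ?R u v = qsum ?B u v + qsum ?C u v"
    using nonempty by (simp add: renormalized_def sum_list_addf[symmetric] cong: map_cong)
  with defect have B_qsum: "qsum ?B u v = ?R u * ?R v - ?C u * ?C v"
    by (simp add: algebra_simps)
  have "qsum ?C u v = - fls_polar (qsum ?B u v)"
    using nonempty
    by (simp add: counterterm_eq fls_polar_sum_list uminus_sum_list_map comp_def cong: map_cong)
  also have "\<dots> = - fls_polar (?R u * ?R v) + fls_polar (?C u * ?C v)"
    by (simp add: B_qsum fls_polar_diff)
  also have "\<dots> = ?C u * ?C v"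
    using assms(1,2)
    by (simp add: fls_polar_mult_regular renormalized_nth_neg counterterm_eq
        fls_polar_mult_polar fls_polar_uminus)
  finally show ?thesis ..
qed

theorem counterterm_renormalized_mult:
  fixes F :: "word \<Rightarrow> 'a::comm_ring_1 fls"
  assumes F_Nil: "F [] = 1"
    and F_mult: "\<And>u v. P u \<Longrightarrow> P v \<Longrightarrow> F u * F v = qsum F u v"
    and take_closed: "\<And>u i. P u \<Longrightarrow> P (take i u)"
    and drop_closed: "\<And>u i. P u \<Longrightarrow> P (drop i u)"
    and "P u" "P v"
  shows "counterterm F u * counterterm F v = qsum (counterterm F) u v
    \<and> renormalized F u * renormalized F v = qsum (renormalized F) u v"
  using \<open>P u\<close> \<open>P v\<close>
proof (induction "length u + length v" arbitrary: u v rule: less_induct)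
  case less
  show ?case
  proof (cases "u = [] \<or> v = []")
    case False
    have "counterterm F (drop i u) * counterterm F (drop j v)
        = qsum (counterterm F) (drop i u) (drop j v)" if "i \<noteq> 0 \<or> j \<noteq> 0" for i j
    proof -
      have "0 < length u" "0 < length v"
        using False by simp_all
      with that have "length (drop i u) + length (drop j v) < length u + length v"
        unfolding length_drop by arith
      then show ?thesis
        using less drop_closed by blast
    qed
    then have defect: "renormalized F u * renormalized F v - qsum (renormalized F) u v
        = counterterm F u * counterterm F v - qsum (counterterm F) u v"
      using F_mult take_closed less.prems
      by (intro renormalized_defect_eq_counterterm_defect F_Nil) blast+
    with False show ?thesis
      using counterterm_mult_of_defect_eq[OF _ _ defect] by auto
  qed (auto simp: renormalized_def)
qed

section \<open>Laurent expansions on the left half-plane\<close>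

lemma at_0_within_left_half_plane_nontrivial: "at (0::complex) within {z. Re z < 0} \<noteq> bot"
proof -
  have "(0::complex) islimpt {z. Re z < 0}"
    unfolding islimpt_approachable
  proof (intro allI impI)
    fix e :: real
    assume "0 < e"
    then show "\<exists>z\<in>{z. Re z < 0}. z \<noteq> 0 \<and> dist z 0 < e"
      by (intro bexI[of _ "complex_of_real (- e / 2)"]) (auto simp: dist_norm)
  qed
  then show ?thesis
    by (simp add: trivial_limit_within)
qed

lemma eventually_in_conv_radius_left:
  assumes "0 < r"
  shows "eventually (\<lambda>z. ereal (norm z) < r \<and> z \<noteq> 0) (at (0::complex) within {z. Re z < 0})"
proof -
  have "eventually (\<lambda>z. z \<in> eball 0 r - {0}) (at (0::complex))"
    using assms by (intro eventually_at_in_open) (auto simp: zero_ereal_def)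
  then have "eventually (\<lambda>z. z \<in> eball 0 r - {0}) (at (0::complex) within {z. Re z < 0})"
    by (rule filter_leD[OF at_le, rotated]) simp
  then show ?thesis
    by eventually_elim auto
qed

lemma has_laurent_expansion_imp_left:
  "f has_laurent_expansion F \<Longrightarrow> has_laurent_expansion_left f F"
  unfolding has_laurent_expansion_left_def has_laurent_expansion_def
  using filter_leD[OF at_le[OF subset_UNIV]] by blast

lemma has_laurent_expansion_left_cong:
  assumes "has_laurent_expansion_left f F" and "\<And>z. Re z < 0 \<Longrightarrow> f z = g z"
  shows "has_laurent_expansion_left g F"
proof -
  have "eventually (\<lambda>z. Re z < 0) (at (0::complex) within {z. Re z < 0})"
    by (simp add: eventually_at_filter)
  with assms show ?thesis
    unfolding has_laurent_expansion_left_def by (auto elim: eventually_elim2)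
qed

lemma has_laurent_expansion_left_mult:
  assumes "has_laurent_expansion_left f F" and "has_laurent_expansion_left g G"
  shows "has_laurent_expansion_left (\<lambda>z. f z * g z) (F * G)"
proof -
  from assms have r: "0 < min (fls_conv_radius F) (fls_conv_radius G)"
    and eF: "eventually (\<lambda>z. eval_fls F z = f z) (at 0 within {z. Re z < 0})"
    and eG: "eventually (\<lambda>z. eval_fls G z = g z) (at 0 within {z. Re z < 0})"
    by (auto simp: has_laurent_expansion_left_def)
  have "eventually (\<lambda>z. eval_fls (F * G) z = f z * g z) (at 0 within {z. Re z < 0})"
    using eF eG eventually_in_conv_radius_left[OF r]
    by eventually_elim (auto simp: eval_fls_mult)
  moreover have "0 < fls_conv_radius (F * G)"
    using fls_conv_radius_mult[of F G] r by (metis less_le_trans)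
  ultimately show ?thesis
    by (simp add: has_laurent_expansion_left_def)
qed

lemma has_laurent_expansion_left_add:
  assumes "has_laurent_expansion_left f F" and "has_laurent_expansion_left g G"
  shows "has_laurent_expansion_left (\<lambda>z. f z + g z) (F + G)"
proof -
  from assms have r: "0 < min (fls_conv_radius F) (fls_conv_radius G)"
    and eF: "eventually (\<lambda>z. eval_fls F z = f z) (at 0 within {z. Re z < 0})"
    and eG: "eventually (\<lambda>z. eval_fls G z = g z) (at 0 within {z. Re z < 0})"
    by (auto simp: has_laurent_expansion_left_def)
  have "eventually (\<lambda>z. eval_fls (F + G) z = f z + g z) (at 0 within {z. Re z < 0})"
    using eF eG eventually_in_conv_radius_left[OF r]
    by eventually_elim (auto simp: eval_fls_add)
  moreover have "0 < fls_conv_radius (F + G)"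
    using fls_conv_radius_add[of F G] r by (metis less_le_trans)
  ultimately show ?thesis
    by (simp add: has_laurent_expansion_left_def)
qed

lemma has_laurent_expansion_left_0: "has_laurent_expansion_left (\<lambda>_. 0) 0"
  by (rule has_laurent_expansion_imp_left) simp

lemma has_laurent_expansion_left_sum:
  "(\<And>x. x \<in> A \<Longrightarrow> has_laurent_expansion_left (f x) (F x))
   \<Longrightarrow> has_laurent_expansion_left (\<lambda>z. \<Sum>x\<in>A. f x z) (\<Sum>x\<in>A. F x)"
  by (induction A rule: infinite_finite_induct)
     (simp_all add: has_laurent_expansion_left_0 has_laurent_expansion_left_add)

lemma has_laurent_expansion_left_sum_list:
  "(\<And>x. x \<in> set xs \<Longrightarrow> has_laurent_expansion_left (f x) (F x))
   \<Longrightarrow> has_laurent_expansion_left (\<lambda>z. \<Sum>x\<leftarrow>xs. f x z) (\<Sum>x\<leftarrow>xs. F x)"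
  by (induction xs) (simp_all add: has_laurent_expansion_left_0 has_laurent_expansion_left_add)

text \<open>A nonzero convergent Laurent series has no zeros in a punctured neighbourhood of 0,
  which meets the left half-plane.\<close>
lemma has_laurent_expansion_left_unique:
  assumes "has_laurent_expansion_left f F" and "has_laurent_expansion_left f G"
  shows "F = G"
proof (rule ccontr)
  assume "F \<noteq> G"
  from assms have r: "0 < min (fls_conv_radius F) (fls_conv_radius G)"
    and eF: "eventually (\<lambda>z. eval_fls F z = f z) (at 0 within {z. Re z < 0})"
    and eG: "eventually (\<lambda>z. eval_fls G z = f z) (at 0 within {z. Re z < 0})"
    by (auto simp: has_laurent_expansion_left_def)
  have "0 < fls_conv_radius (F - G)"
    using fls_conv_radius_diff[of F G] r by (metis less_le_trans)
  then have "eval_fls (F - G) has_laurent_expansion (F - G)"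
    by (rule eval_fls_has_laurent_expansion)
  then have "eventually (\<lambda>z. eval_fls (F - G) z \<noteq> 0) (at 0)"
    using \<open>F \<noteq> G\<close> by (subst has_laurent_expansion_eventually_nonzero_iff') auto
  then have "eventually (\<lambda>z. eval_fls (F - G) z \<noteq> 0) (at 0 within {z. Re z < 0})"
    by (rule filter_leD[OF at_le, rotated]) simp
  then have "eventually (\<lambda>z. False) (at (0::complex) within {z. Re z < 0})"
    using eF eG eventually_in_conv_radius_left[OF r]
    by eventually_elim (auto simp: eval_fls_diff)
  then show False
    using at_0_within_left_half_plane_nontrivial by (simp add: trivial_limit_def)
qed

lemma laurent_coeff_eqI:
  "has_laurent_expansion_left f F \<Longrightarrow> laurent_coeff f n = F $$ n"
  unfolding laurent_coeff_def
  by (rule arg_cong[where f = "\<lambda>F. F $$ n"], rule the_equality)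
     (auto intro: has_laurent_expansion_left_unique)

definition fls_of_rat :: "rat fls \<Rightarrow> 'a::field_char_0 fls" where
  "fls_of_rat Q = Abs_fls (\<lambda>n. of_rat (Q $$ n))"

lemma fls_of_rat_nth [simp]: "fls_of_rat Q $$ n = of_rat (Q $$ n)"
  unfolding fls_of_rat_def
  by (rule nth_Abs_fls, rule MOST_mono[OF MOST_fls_neg_nth_eq_0]) simp

lemma fls_of_rat_mult: "fls_of_rat (P * Q) = fls_of_rat P * fls_of_rat Q"
  by (rule fls_eqI)
     (simp add: fls_mult_nth_bounds[where a = "fls_subdegree P" and b = "fls_subdegree Q"]
        of_rat_sum of_rat_mult)

lemma fls_of_rat_add: "fls_of_rat (P + Q) = fls_of_rat P + fls_of_rat Q"
  by (rule fls_eqI) (simp add: of_rat_add)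

lemma fls_of_rat_diff: "fls_of_rat (P - Q) = fls_of_rat P - fls_of_rat Q"
  by (rule fls_eqI) (simp add: of_rat_diff)

lemma fls_of_rat_0 [simp]: "fls_of_rat 0 = 0"
  by (rule fls_eqI) simp

lemma fls_of_rat_1 [simp]: "fls_of_rat 1 = 1"
  by (rule fls_eqI) simp

lemma fls_of_rat_const: "fls_of_rat (fls_const c) = fls_const (of_rat c)"
  by (rule fls_eqI) simp

lemma fls_of_rat_inverse: "fls_of_rat (inverse Q) = inverse (fls_of_rat Q)"
proof (cases "Q = 0")
  case False
  then have "fls_of_rat Q * fls_of_rat (inverse Q) = (1 :: 'a fls)"
    by (simp flip: fls_of_rat_mult)
  then show ?thesis
    by (metis inverse_unique)
qed simp

definition rat_laurent_left :: "(complex \<Rightarrow> complex) \<Rightarrow> nat \<Rightarrow> bool" where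
  "rat_laurent_left f N \<longleftrightarrow>
     (\<exists>Q. (\<forall>n < - int N. Q $$ n = 0) \<and> has_laurent_expansion_left f (fls_of_rat Q))"

lemma rat_laurent_left_cong:
  "rat_laurent_left f N \<Longrightarrow> (\<And>z. Re z < 0 \<Longrightarrow> f z = g z) \<Longrightarrow> rat_laurent_left g N"
  unfolding rat_laurent_left_def using has_laurent_expansion_left_cong by blast

lemma rat_laurent_left_mono: "rat_laurent_left f N \<Longrightarrow> N \<le> M \<Longrightarrow> rat_laurent_left f M"
  unfolding rat_laurent_left_def by force

lemma rat_laurent_left_mult:
  assumes "rat_laurent_left f N" and "rat_laurent_left g M"
  shows "rat_laurent_left (\<lambda>z. f z * g z) (N + M)"
proof -
  obtain P Q where P: "\<forall>n < - int N. P $$ n = 0" "has_laurent_expansion_left f (fls_of_rat P)"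
    and Q: "\<forall>n < - int M. Q $$ n = 0" "has_laurent_expansion_left g (fls_of_rat Q)"
    using assms by (auto simp: rat_laurent_left_def)
  have "\<forall>n < - int (N + M). (P * Q) $$ n = 0"
    using P(1) Q(1) by (simp add: fls_mult_nth_bounds[where a = "- int N" and b = "- int M"])
  moreover have "has_laurent_expansion_left (\<lambda>z. f z * g z) (fls_of_rat (P * Q))"
    unfolding fls_of_rat_mult by (rule has_laurent_expansion_left_mult[OF P(2) Q(2)])
  ultimately show ?thesis
    unfolding rat_laurent_left_def by blast
qed

lemma rat_laurent_left_add:
  assumes "rat_laurent_left f N" and "rat_laurent_left g N"
  shows "rat_laurent_left (\<lambda>z. f z + g z) N"
proof -
  obtain P Q where P: "\<forall>n < - int N. P $$ n = 0" "has_laurent_expansion_left f (fls_of_rat P)"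
    and Q: "\<forall>n < - int N. Q $$ n = 0" "has_laurent_expansion_left g (fls_of_rat Q)"
    using assms by (auto simp: rat_laurent_left_def)
  then have "\<forall>n < - int N. (P + Q) $$ n = 0"
    and "has_laurent_expansion_left (\<lambda>z. f z + g z) (fls_of_rat (P + Q))"
    unfolding fls_of_rat_add by (simp_all add: has_laurent_expansion_left_add)
  then show ?thesis
    unfolding rat_laurent_left_def by blast
qed

lemma rat_laurent_left_0: "rat_laurent_left (\<lambda>_. 0) N"
  unfolding rat_laurent_left_def
  by (intro exI[of _ 0]) (simp add: has_laurent_expansion_left_0)

lemma rat_laurent_left_if_zero:
  "rat_laurent_left f N \<Longrightarrow> rat_laurent_left (\<lambda>z. if P then f z else 0) N"
  by (cases P) (simp_all add: rat_laurent_left_0)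

lemma rat_laurent_left_sum:
  "(\<And>x. x \<in> A \<Longrightarrow> rat_laurent_left (f x) N) \<Longrightarrow> rat_laurent_left (\<lambda>z. \<Sum>x\<in>A. f x z) N"
  by (induction A rule: infinite_finite_induct)
     (simp_all add: rat_laurent_left_0 rat_laurent_left_add)

lemma rat_laurent_left_const: "rat_laurent_left (\<lambda>_. of_rat c) 0"
  unfolding rat_laurent_left_def
  by (intro exI[of _ "fls_const c"])
     (auto simp: fls_of_rat_const intro!: has_laurent_expansion_imp_left)

lemma of_rat_fact: "of_rat (fact k) = (fact k :: 'a::field_char_0)"
  by (metis of_nat_fact of_rat_of_nat_eq)

definition fls_exp_rat :: "nat \<Rightarrow> rat fls" where
  "fls_exp_rat c = fps_to_fls (Abs_fps (\<lambda>k. of_nat c ^ k / fact k))"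

lemma has_laurent_expansion_exp_rat:
  "(\<lambda>z. exp (of_nat c * z)) has_laurent_expansion fls_of_rat (fls_exp_rat c)"
proof -
  have "fls_of_rat (fls_exp_rat c) = (fps_to_fls (fps_exp (of_nat c)) :: complex fls)"
    by (intro fls_eqI) (simp add: fls_exp_rat_def of_rat_divide of_rat_power of_rat_fact)
  then show ?thesis
    by (simp add: has_laurent_expansion_fps has_fps_expansion_exp)
qed

lemma rat_laurent_left_exp: "rat_laurent_left (\<lambda>z. exp (of_nat c * z)) 0"
  unfolding rat_laurent_left_def
proof (intro exI conjI)
  show "\<forall>n < - int 0. fls_exp_rat c $$ n = 0"
    by (simp add: fls_exp_rat_def)
qed (rule has_laurent_expansion_imp_left[OF has_laurent_expansion_exp_rat])

lemma rat_laurent_left_geometric: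
  assumes "0 < B"
  shows "rat_laurent_left (\<lambda>z. inverse (1 - exp (of_nat B * z))) 1"
proof -
  let ?E = "1 - fls_exp_rat B"
  have "?E $$ 1 \<noteq> 0"
    using assms by (simp add: fls_exp_rat_def)
  then have "fls_subdegree ?E \<le> 1"
    by (rule fls_subdegree_leI)
  then have "- 1 \<le> fls_subdegree (inverse ?E)"
    by simp
  then have "\<forall>n < - int 1. inverse ?E $$ n = 0"
    by simp
  moreover have "(\<lambda>z. inverse (1 - exp (of_nat B * z)))
      has_laurent_expansion fls_of_rat (inverse ?E)"
    unfolding fls_of_rat_inverse fls_of_rat_diff fls_of_rat_1
    by (intro laurent_expansion_intros has_laurent_expansion_exp_rat)
  ultimately show ?thesis
    unfolding rat_laurent_left_def by (blast intro: has_laurent_expansion_imp_left)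
qed

section \<open>Sums over increasing index tuples\<close>

lemma single_add_eq_iff:
  fixes m y :: "'k \<Rightarrow>\<^sub>0 nat"
  shows "Poly_Mapping.single i k + y = m
    \<longleftrightarrow> k \<le> Poly_Mapping.lookup m i \<and> y = m - Poly_Mapping.single i k"
proof
  assume m: "Poly_Mapping.single i k + y = m"
  then show "k \<le> Poly_Mapping.lookup m i \<and> y = m - Poly_Mapping.single i k"
    by (auto simp: Poly_Mapping.lookup_add)
next
  assume "k \<le> Poly_Mapping.lookup m i \<and> y = m - Poly_Mapping.single i k"
  then show "Poly_Mapping.single i k + y = m"
    by (intro poly_mapping_eqI)
       (auto simp: Poly_Mapping.lookup_add lookup_minus lookup_single when_def)
qed

definition tuples_above :: "word \<Rightarrow> mono \<Rightarrow> nat \<Rightarrow> nat list set" where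
  "tuples_above w m a = {js. length js = length w \<and> sorted_wrt (<) js \<and> (\<forall>i\<in>set js. a < i)
                          \<and> tuple_mono w js = m}"

definition tuple_weight :: "word \<Rightarrow> nat list \<Rightarrow> complex \<Rightarrow> complex" where
  "tuple_weight w js z = (\<Prod>j<length w. exp (of_nat (js ! j) * of_nat (snd (w ! j)) * z))"

definition tuple_series :: "word \<Rightarrow> mono \<Rightarrow> nat \<Rightarrow> complex \<Rightarrow> complex" where
  "tuple_series w m a z = (\<Sum>\<^sub>\<infinity>js\<in>tuples_above w m a. tuple_weight w js z)"

lemma tuple_mono_Cons:
  "tuple_mono (c # w) (i # js) = Poly_Mapping.single i (fst c) + tuple_mono w js"
  unfolding tuple_mono_def by (simp only: length_Cons sum.lessThan_Suc_shift) simp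

lemma tuple_weight_Cons:
  "tuple_weight (c # w) (i # js) z = exp (of_nat i * of_nat (snd c) * z) * tuple_weight w js z"
  unfolding tuple_weight_def by (simp only: length_Cons prod.lessThan_Suc_shift) simp

lemma tuples_above_Nil: "tuples_above [] m a = (if m = 0 then {[]} else {})"
  by (auto simp: tuples_above_def tuple_mono_def)

lemma tuples_above_Cons:
  "tuples_above (c # w) m a = (\<lambda>(i, js). i # js) `
     (SIGMA i:{i. a < i \<and> fst c \<le> Poly_Mapping.lookup m i}.
        tuples_above w (m - Poly_Mapping.single i (fst c)) i)"
  by (auto simp: tuples_above_def length_Suc_conv tuple_mono_Cons single_add_eq_iff image_iff
      Poly_Mapping.lookup_add intro: order.strict_trans)

lemma inj_on_Cons_pair: "inj_on (\<lambda>(i, js). i # js) A"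
  by (auto simp: inj_on_def)

lemma has_sum_geometric_tail:
  fixes r :: "'a::{real_normed_field,banach}"
  assumes "norm r < 1"
  shows "((\<lambda>i. r ^ i) has_sum (r ^ Suc a / (1 - r))) {a<..}"
proof -
  have "((\<lambda>k. r ^ k) has_sum (1 / (1 - r))) UNIV"
    by (rule norm_summable_imp_has_sum)
       (use assms in \<open>auto intro: geometric_sums summable_geometric simp: norm_power\<close>)
  from has_sum_cmult_left[OF this, of "r ^ Suc a"]
  have "((\<lambda>k. r ^ (k + Suc a)) has_sum (r ^ Suc a / (1 - r))) UNIV"
    by (simp add: power_add mult_ac)
  moreover have "{a<..} = (\<lambda>k. k + Suc a) ` UNIV"
    by (auto simp: image_iff) presburger
  ultimately show ?thesis
    by (simp add: has_sum_reindex inj_on_def comp_def)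
qed

lemma summable_on_geometric_bound:
  fixes g :: "nat \<Rightarrow> real"
  assumes "0 < q" "q < 1" and "A \<subseteq> {0<..}"
    and "\<And>i. 0 \<le> g i" and "\<And>i. g i \<le> q ^ i * K"
  shows "g summable_on A" and "infsum g A \<le> q / (1 - q) * K"
proof -
  have geo: "((\<lambda>i. q ^ i * K) has_sum (q / (1 - q) * K)) {0<..}"
    using has_sum_cmult_left[OF has_sum_geometric_tail[of q 0]] assms(1,2) by simp
  then have "(\<lambda>i. q ^ i * K) summable_on A"
    using summable_on_subset_banach[OF has_sum_imp_summable[OF geo] assms(3)] by blast
  then have "(\<lambda>i. norm (g i)) summable_on A"
    by (rule Infinite_Sum.abs_summable_on_comparison_test') (simp add: assms(4,5))
  then show g_summable: "g summable_on A"
    by (rule abs_summable_summable)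
  have "0 \<le> K"
    using assms(4,5)[of 0] by simp
  then show "infsum g A \<le> q / (1 - q) * K"
    using infsum_mono_neutral[OF g_summable has_sum_imp_summable[OF geo]] assms geo
    by (auto simp: infsumI)
qed

lemma norm_exp_nat_mult_le:
  assumes "Re z < 0" and "0 < b"
  shows "norm (exp (of_nat i * of_nat b * z)) \<le> exp (Re z) ^ i"
proof -
  have "real i * Re z * real b \<le> real i * Re z * 1"
    using assms by (intro mult_left_mono_neg) (auto simp: mult_nonneg_nonpos)
  then show ?thesis
    by (simp add: norm_exp_eq_Re mult_ac flip: exp_of_nat_mult)
qed

lemma tuple_weight_norm_summable:
  assumes "Re z < 0" and "is_basis w"
  shows "(\<lambda>js. norm (tuple_weight w js z)) summable_on tuples_above w m a
    \<and> (\<Sum>\<^sub>\<infinity>js\<in>tuples_above w m a. norm (tuple_weight w js z))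
        \<le> (exp (Re z) / (1 - exp (Re z))) ^ length w"
  using assms(2)
proof (induction w arbitrary: m a)
  case Nil
  show ?case
    by (auto simp: tuples_above_Nil tuple_weight_def)
next
  case (Cons c w)
  define q where "q = exp (Re z)"
  define K where "K = (q / (1 - q)) ^ length w"
  have q: "0 < q" "q < 1" and "0 \<le> K"
    using assms(1) by (auto simp: q_def K_def)
  have "is_basis w" and "0 < snd c"
    using Cons.prems by (auto simp: is_basis_def)
  define A where "A = {i. a < i \<and> fst c \<le> Poly_Mapping.lookup m i}"
  define B where "B i = tuples_above w (m - Poly_Mapping.single i (fst c)) i" for i
  define e where "e i = norm (exp (of_nat i * of_nat (snd c) * z))" for i
  define f where "f = (\<lambda>(i, js). e i * norm (tuple_weight w js z))"
  define g where "g i = e i * (\<Sum>\<^sub>\<infinity>js\<in>B i. norm (tuple_weight w js z))" for i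
  have IH: "(\<lambda>js. norm (tuple_weight w js z)) summable_on B i"
    "(\<Sum>\<^sub>\<infinity>js\<in>B i. norm (tuple_weight w js z)) \<le> K" for i
    using Cons.IH[OF \<open>is_basis w\<close>] by (auto simp: B_def K_def q_def)
  have f_fibre: "((\<lambda>js. f (i, js)) has_sum g i) (B i)" for i
    using has_sum_cmult_right[OF has_sum_infsum[OF IH(1)], of "e i"] by (simp add: f_def g_def)
  have "e i \<le> q ^ i" for i
    unfolding e_def q_def by (rule norm_exp_nat_mult_le[OF assms(1) \<open>0 < snd c\<close>])
  then have g_le: "g i \<le> q ^ i * K" and g_nonneg: "0 \<le> g i" for i
    unfolding g_def using IH(2) \<open>0 \<le> K\<close> q
    by (auto intro!: mult_mono infsum_nonneg mult_nonneg_nonneg simp: e_def)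
  have "A \<subseteq> {0<..}"
    by (auto simp: A_def)
  note g_bound = summable_on_geometric_bound[OF q this g_nonneg g_le]
  have f_summable: "f summable_on Sigma A B"
    by (rule summable_on_SigmaI[OF f_fibre g_bound(1)]) (auto simp: f_def e_def)
  have T: "tuples_above (c # w) m a = (\<lambda>(i, js). i # js) ` Sigma A B"
    by (simp add: tuples_above_Cons A_def B_def[abs_def])
  have comp: "(\<lambda>js. norm (tuple_weight (c # w) js z)) \<circ> (\<lambda>(i, js). i # js) = f"
    by (auto simp: fun_eq_iff f_def e_def tuple_weight_Cons norm_mult)
  have "(\<lambda>js. norm (tuple_weight (c # w) js z)) summable_on tuples_above (c # w) m a"
    unfolding T by (subst summable_on_reindex[OF inj_on_Cons_pair]) (simp add: comp f_summable)
  moreover have "(\<Sum>\<^sub>\<infinity>js\<in>tuples_above (c # w) m a. norm (tuple_weight (c # w) js z)) = infsum g A"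
    unfolding T infsum_reindex[OF inj_on_Cons_pair] comp
    by (rule infsumI[symmetric], rule has_sum_SigmaD[OF has_sum_infsum[OF f_summable] f_fibre])
  moreover note g_bound(2)
  ultimately show ?case
    by (simp add: K_def q_def)
qed

lemma tuple_weight_summable:
  "Re z < 0 \<Longrightarrow> is_basis w \<Longrightarrow> (\<lambda>js. tuple_weight w js z) summable_on tuples_above w m a"
  using tuple_weight_norm_summable[of z w m a] by (auto intro: abs_summable_summable)

lemma tuple_series_Nil: "tuple_series [] m a z = (if m = 0 then 1 else 0)"
  by (simp add: tuple_series_def tuples_above_Nil tuple_weight_def)

lemma tuple_series_Cons:
  fixes z :: complex and m :: mono
  assumes "Re z < 0" and "is_basis (c # w)"
  defines "h \<equiv> \<lambda>i. exp (of_nat i * of_nat (snd c) * z)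
                 * tuple_series w (m - Poly_Mapping.single i (fst c)) i z"
  shows "tuple_series (c # w) m a z = (\<Sum>\<^sub>\<infinity>i\<in>{i. a < i \<and> fst c \<le> Poly_Mapping.lookup m i}. h i)"
    and "h summable_on {i. a < i \<and> fst c \<le> Poly_Mapping.lookup m i}"
proof -
  define A where "A = {i. a < i \<and> fst c \<le> Poly_Mapping.lookup m i}"
  define B where "B i = tuples_above w (m - Poly_Mapping.single i (fst c)) i" for i
  define f where "f i js = exp (of_nat i * of_nat (snd c) * z) * tuple_weight w js z" for i js
  have T: "tuples_above (c # w) m a = (\<lambda>(i, js). i # js) ` Sigma A B"
    by (simp add: tuples_above_Cons A_def B_def[abs_def])
  have comp: "(\<lambda>js. tuple_weight (c # w) js z) \<circ> (\<lambda>(i, js). i # js) = (\<lambda>(i, js). f i js)"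
    by (auto simp: fun_eq_iff f_def tuple_weight_Cons)
  have f_summable: "(\<lambda>(i, js). f i js) summable_on Sigma A B"
    using tuple_weight_summable[OF assms(1,2), of m a]
    unfolding T summable_on_reindex[OF inj_on_Cons_pair] comp .
  have fibre: "(\<Sum>\<^sub>\<infinity>js\<in>B i. f i js) = h i" for i
    by (simp add: f_def h_def tuple_series_def B_def infsum_cmult_right')
  show "tuple_series (c # w) m a z = (\<Sum>\<^sub>\<infinity>i\<in>A. h i)"
    unfolding tuple_series_def T infsum_reindex[OF inj_on_Cons_pair] comp
    using infsum_Sigma'_banach[OF f_summable] by (simp add: fibre)
  show "h summable_on A"
    using summable_on_Sigma_banach[OF f_summable] by (simp add: fibre)
qed

lemma tuple_series_Cons_split:
  assumes "Re z < 0" and "is_basis (c # w)" and "a \<le> M"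
  shows "tuple_series (c # w) m a z
    = (\<Sum>i\<in>{i. a < i \<and> fst c \<le> Poly_Mapping.lookup m i \<and> i \<le> M}.
         exp (of_nat i * of_nat (snd c) * z)
         * tuple_series w (m - Poly_Mapping.single i (fst c)) i z)
      + tuple_series (c # w) m M z"
proof -
  define h where "h i = exp (of_nat i * of_nat (snd c) * z)
    * tuple_series w (m - Poly_Mapping.single i (fst c)) i z" for i
  define A where "A = {i. a < i \<and> fst c \<le> Poly_Mapping.lookup m i}"
  have "A = {i\<in>A. i \<le> M} \<union> {i. M < i \<and> fst c \<le> Poly_Mapping.lookup m i}"
    using assms(3) by (auto simp: A_def)
  moreover have "finite {i\<in>A. i \<le> M}"
    by (rule finite_subset[of _ "{..M}"]) auto
  moreover have "h summable_on A"
    unfolding A_def h_def by (rule tuple_series_Cons(2)[OF assms(1,2)])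
  ultimately have "infsum h A = (\<Sum>i\<in>{i\<in>A. i \<le> M}. h i)
      + infsum h {i. M < i \<and> fst c \<le> Poly_Mapping.lookup m i}"
    by (metis (no_types, lifting) infsum_Un_disjoint infsum_finite summable_on_subset_banach
        Un_upper1 Un_upper2 disjoint_iff mem_Collect_eq not_less)
  then show ?thesis
    using tuple_series_Cons(1)[OF assms(1,2)] by (simp add: A_def h_def[abs_def])
qed

definition beta_sum :: "word \<Rightarrow> nat" where
  "beta_sum w = sum_list (map snd w)"

lemma beta_sum_Nil [simp]: "beta_sum [] = 0"
  and beta_sum_Cons [simp]: "beta_sum (c # w) = snd c + beta_sum w"
  by (simp_all add: beta_sum_def)

lemma beta_sum_qsh: "w \<in> set (qsh u v) \<Longrightarrow> beta_sum w = beta_sum u + beta_sum v"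
  by (induction u v arbitrary: w rule: qsh.induct) (auto simp: col_add_def)

fun geometric_product :: "word \<Rightarrow> complex \<Rightarrow> complex" where
  "geometric_product [] z = 1"
| "geometric_product (c # w) z = geometric_product w z
     * exp (of_nat (beta_sum (c # w)) * z) * inverse (1 - exp (of_nat (beta_sum (c # w)) * z))"

lemma tuple_series_alpha_free:
  assumes "Re z < 0" and "is_basis w" and "\<forall>c\<in>set w. fst c = 0"
  shows "tuple_series w 0 a z = exp (of_nat a * of_nat (beta_sum w) * z) * geometric_product w z"
  using assms(2,3)
proof (induction w arbitrary: a)
  case Nil
  then show ?case
    by (simp add: tuple_series_Nil)
next
  case (Cons c w)
  have "is_basis w" "\<forall>c\<in>set w. fst c = 0" "fst c = 0"
    using Cons.prems by (auto simp: is_basis_def)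
  define r where "r = exp (of_nat (beta_sum (c # w)) * z)"
  have "0 < real (beta_sum (c # w))"
    using Cons.prems by (simp add: is_basis_def)
  then have "norm r < 1"
    using assms(1) unfolding r_def by (simp add: mult_pos_neg del: beta_sum_Cons)
  have summand: "exp (of_nat i * of_nat (snd c) * z) * tuple_series w 0 i z
      = geometric_product w z * r ^ i" for i
    using Cons.IH[OF \<open>is_basis w\<close> \<open>\<forall>c\<in>set w. fst c = 0\<close>]
    by (simp add: r_def algebra_simps flip: exp_add exp_of_nat_mult)
  have "tuple_series (c # w) 0 a z = (\<Sum>\<^sub>\<infinity>i\<in>{a<..}. geometric_product w z * r ^ i)"
    using tuple_series_Cons(1)[OF assms(1) Cons.prems(1), of 0 a] \<open>fst c = 0\<close>
    by (simp add: summand greaterThan_def)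
  also have "\<dots> = geometric_product w z * (r ^ Suc a / (1 - r))"
    by (rule infsumI, rule has_sum_cmult_right, rule has_sum_geometric_tail[OF \<open>norm r < 1\<close>])
  also have "\<dots> = exp (of_nat a * of_nat (beta_sum (c # w)) * z) * geometric_product (c # w) z"
    by (simp add: r_def divide_inverse algebra_simps flip: exp_of_nat_mult of_nat_add exp_add)
  finally show ?case .
qed

lemma lookup_tuple_mono:
  "Poly_Mapping.lookup (tuple_mono w js) k = (\<Sum>j<length w. if js ! j = k then fst (w ! j) else 0)"
  by (simp add: tuple_mono_def lookup_sum lookup_single when_def)

lemma tuples_above_empty:
  assumes "\<forall>k\<in>Poly_Mapping.keys m. k \<le> a" and "\<not> (m = 0 \<and> (\<forall>c\<in>set w. fst c = 0))"
  shows "tuples_above w m a = {}"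
proof (rule ccontr)
  assume "tuples_above w m a \<noteq> {}"
  then obtain js where len: "length js = length w" and above: "\<forall>i\<in>set js. a < i"
    and m: "tuple_mono w js = m"
    by (auto simp: tuples_above_def)
  show False
  proof (cases "m = 0")
    case False
    then obtain k where k: "Poly_Mapping.lookup m k \<noteq> 0"
      by (metis lookup_zero poly_mapping_eqI)
    then have "k \<le> a"
      using assms(1) by (simp add: in_keys_iff)
    have "js ! j \<noteq> k" if "j < length w" for j
    proof -
      have "js ! j \<in> set js"
        using that len by simp
      then show ?thesis
        using above \<open>k \<le> a\<close> by auto
    qed
    then have "Poly_Mapping.lookup (tuple_mono w js) k = 0"
      unfolding lookup_tuple_mono by (intro sum.neutral) auto
    then show False
      using k m by simp
  next
    case True
    then obtain j where j: "j < length w" "fst (w ! j) \<noteq> 0"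
      using assms(2) by (auto simp: in_set_conv_nth)
    have "fst (w ! j) \<le> Poly_Mapping.lookup (tuple_mono w js) (js ! j)"
      unfolding lookup_tuple_mono
      using j(1)
        member_le_sum[of j "{..<length w}" "\<lambda>j'. if js ! j' = js ! j then fst (w ! j') else 0"]
      by simp
    then show False
      using True m j(2) by simp
  qed
qed

lemma tuple_series_beyond_keys:
  assumes "Re z < 0" and "is_basis w" and "\<forall>k\<in>Poly_Mapping.keys m. k \<le> a"
  shows "tuple_series w m a z = (if m = 0 \<and> (\<forall>c\<in>set w. fst c = 0)
    then exp (of_nat a * of_nat (beta_sum w) * z) * geometric_product w z else 0)"
  using tuple_series_alpha_free[OF assms(1,2)] tuples_above_empty[OF assms(3)]
  by (auto simp: tuple_series_def)

lemma rat_laurent_left_geometric_product: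
  "is_basis w \<Longrightarrow> rat_laurent_left (geometric_product w) (length w)"
proof (induction w)
  case Nil
  then show ?case
    using rat_laurent_left_const[of 1] by simp
next
  case (Cons c w)
  then have "is_basis w" and "0 < beta_sum (c # w)"
    by (auto simp: is_basis_def)
  then have "rat_laurent_left (\<lambda>z. geometric_product w z * exp (of_nat (beta_sum (c # w)) * z)
      * inverse (1 - exp (of_nat (beta_sum (c # w)) * z))) (length w + 0 + 1)"
    by (intro rat_laurent_left_mult Cons.IH rat_laurent_left_exp rat_laurent_left_geometric)
  then show ?case
    by simp
qed

text \<open>Split the first index at the maximum \<open>M\<close> of \<open>a\<close> and the indices occurring in \<open>m\<close>: up to
  \<open>M\<close> the sum is finite, and beyond \<open>M\<close> tuples contribute only if \<open>m = 0\<close> and all \<open>\<alpha>\<close>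
  vanish, in the closed form \<open>geometric_product\<close>.\<close>
theorem rat_laurent_left_tuple_series:
  "is_basis w \<Longrightarrow> rat_laurent_left (tuple_series w m a) (length w)"
proof (induction w arbitrary: m a)
  case Nil
  have "rat_laurent_left (tuple_series [] m a) 0"
    by (rule rat_laurent_left_cong[OF rat_laurent_left_const[of "if m = 0 then 1 else 0"]])
       (simp add: tuple_series_Nil)
  then show ?case
    by simp
next
  case (Cons c w)
  then have "is_basis w"
    by (simp add: is_basis_def)
  define M where "M = Max (insert a (Poly_Mapping.keys m))"
  have "a \<le> M" and keys: "\<forall>k\<in>Poly_Mapping.keys m. k \<le> M"
    by (simp_all add: M_def)
  define I where "I = {i. a < i \<and> fst c \<le> Poly_Mapping.lookup m i \<and> i \<le> M}"
  have exp_factor: "rat_laurent_left (\<lambda>z. exp (of_nat i * of_nat (snd c) * z)) 0" for i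
    using rat_laurent_left_exp[of "i * snd c"] by (simp add: mult.assoc)
  have summand: "rat_laurent_left (\<lambda>z. exp (of_nat i * of_nat (snd c) * z)
      * tuple_series w (m - Poly_Mapping.single i (fst c)) i z) (length (c # w))" for i
    using rat_laurent_left_mult[OF exp_factor Cons.IH[OF \<open>is_basis w\<close>]]
    by (rule rat_laurent_left_mono) simp
  have head: "rat_laurent_left (\<lambda>z. \<Sum>i\<in>I. exp (of_nat i * of_nat (snd c) * z)
      * tuple_series w (m - Poly_Mapping.single i (fst c)) i z) (length (c # w))"
    by (rule rat_laurent_left_sum) (rule summand)
  have "rat_laurent_left (\<lambda>z. exp (of_nat (M * beta_sum (c # w)) * z)
      * geometric_product (c # w) z) (0 + length (c # w))"
    by (rule rat_laurent_left_mult[OF rat_laurent_left_exp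
          rat_laurent_left_geometric_product[OF Cons.prems]])
  then have "rat_laurent_left (\<lambda>z. if m = 0 \<and> (\<forall>c\<in>set (c # w). fst c = 0)
      then exp (of_nat (M * beta_sum (c # w)) * z) * geometric_product (c # w) z else 0)
      (length (c # w))"
    by (intro rat_laurent_left_if_zero) simp
  then have tail: "rat_laurent_left (tuple_series (c # w) m M) (length (c # w))"
    by (rule rat_laurent_left_cong)
       (simp add: tuple_series_beyond_keys[OF _ Cons.prems keys] mult.assoc)
  show ?case
    using rat_laurent_left_add[OF head tail]
    by (rule rat_laurent_left_cong)
       (simp add: tuple_series_Cons_split[OF _ Cons.prems \<open>a \<le> M\<close>] I_def)
qed

section \<open>Polynomial dependence on \<open>t\<close>\<close>

lemma phi_fun_eq:
  "phi_fun w m t z = exp (of_real t * of_nat (beta_sum w) * z) * tuple_series w m 0 z"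
proof -
  have "(\<Prod>j<length w. exp ((of_nat (js ! j) + of_real t) * of_nat (snd (w ! j)) * z))
      = exp (of_real t * of_nat (beta_sum w) * z) * tuple_weight w js z" for js
  proof -
    have "(\<Sum>j<length w. of_real t * of_nat (snd (w ! j)) * z) = of_real t * of_nat (beta_sum w) * z"
      by (simp add: beta_sum_def sum_list_sum_nth atLeast0LessThan sum_distrib_left
          sum_distrib_right mult.assoc)
    then show ?thesis
      by (simp add: tuple_weight_def distrib_right exp_add prod.distrib exp_sum flip: exp_sum)
  qed
  moreover have "tuples w m = tuples_above w m 0"
    by (simp add: tuples_def tuples_above_def)
  ultimately show ?thesis
    unfolding phi_fun_def tuple_series_def by (simp add: infsum_cmult_right')
qed

definition eval_rat_poly :: "rat poly \<Rightarrow> real \<Rightarrow> complex" where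
  "eval_rat_poly p t = complex_of_real (poly (map_poly real_of_rat p) t)"

lemma eval_rat_poly_add: "eval_rat_poly (p + q) t = eval_rat_poly p t + eval_rat_poly q t"
proof -
  have "map_poly real_of_rat (p + q) = map_poly real_of_rat p + map_poly real_of_rat q"
    by (rule poly_eqI) (simp add: coeff_map_poly of_rat_add)
  then show ?thesis
    by (simp add: eval_rat_poly_def)
qed

lemma eval_rat_poly_mult: "eval_rat_poly (p * q) t = eval_rat_poly p t * eval_rat_poly q t"
proof -
  have "map_poly real_of_rat (p * q) = map_poly real_of_rat p * map_poly real_of_rat q"
    by (rule poly_eqI) (simp add: coeff_map_poly coeff_mult of_rat_sum of_rat_mult)
  then show ?thesis
    by (simp add: eval_rat_poly_def)
qed

lemma eval_rat_poly_0 [simp]: "eval_rat_poly 0 t = 0"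
  and eval_rat_poly_1 [simp]: "eval_rat_poly 1 t = 1"
  by (simp_all add: eval_rat_poly_def)

lemma eval_rat_poly_sum: "eval_rat_poly (\<Sum>x\<in>A. f x) t = (\<Sum>x\<in>A. eval_rat_poly (f x) t)"
  by (induction A rule: infinite_finite_induct) (simp_all add: eval_rat_poly_add)

lemma eval_rat_poly_sum_list:
  "eval_rat_poly (\<Sum>x\<leftarrow>xs. f x) t = (\<Sum>x\<leftarrow>xs. eval_rat_poly (f x) t)"
  by (induction xs) (simp_all add: eval_rat_poly_add)

lemma eval_rat_poly_monom: "eval_rat_poly (monom c k) t = of_rat c * of_real t ^ k"
proof -
  have "of_real (of_rat c) = (of_rat c :: complex)"
    by (cases c) (simp add: of_rat_rat of_real_divide)
  then show ?thesis
    by (simp add: eval_rat_poly_def map_poly_monom poly_monom)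
qed

lemma eval_rat_poly_eqI:
  assumes "\<And>t. 0 \<le> t \<Longrightarrow> eval_rat_poly p t = eval_rat_poly q t"
  shows "p = q"
proof -
  let ?d = "map_poly real_of_rat p - map_poly real_of_rat q"
  have "{0..} \<subseteq> {t. poly ?d t = 0}"
    using assms by (auto simp: eval_rat_poly_def)
  then have "?d = 0"
    using poly_roots_finite[of ?d] infinite_Ici[of 0] finite_subset by blast
  then have "coeff p n = coeff q n" for n
    by (metis coeff_map_poly eq_iff_diff_eq_0 of_rat_0 of_rat_eq_iff)
  then show ?thesis
    by (rule poly_eqI)
qed

lemma phi_poly_eqI:
  assumes "\<And>t. 0 \<le> t \<Longrightarrow> laurent_coeff (phi_fun w m t) n = eval_rat_poly p t"
  shows "phi_poly w m n = p"
  unfolding phi_poly_def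
proof (rule the_equality)
  show "\<forall>t\<ge>0. laurent_coeff (phi_fun w m t) n = complex_of_real (poly (map_poly real_of_rat p) t)"
    using assms by (simp add: eval_rat_poly_def)
  fix q
  assume "\<forall>t\<ge>0. laurent_coeff (phi_fun w m t) n = complex_of_real (poly (map_poly real_of_rat q) t)"
  then show "q = p"
    using assms by (intro eval_rat_poly_eqI) (simp add: eval_rat_poly_def)
qed

definition exp_mult_coeff :: "nat \<Rightarrow> nat \<Rightarrow> rat fls \<Rightarrow> int \<Rightarrow> rat poly" where
  "exp_mult_coeff N B Q n
     = (\<Sum>i=0..n + int N. monom (of_nat B ^ nat i / fact (nat i) * Q $$ (n - i)) (nat i))"

lemma exp_mult_coeff_eq_0: "n < - int N \<Longrightarrow> exp_mult_coeff N B Q n = 0"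
  by (simp add: exp_mult_coeff_def)

lemma fls_exp_mult_nth:
  assumes "\<And>n. n < - int N \<Longrightarrow> Q $$ n = 0"
  shows "(fps_to_fls (fps_exp (of_real t * of_nat B)) * fls_of_rat Q) $$ n
    = eval_rat_poly (exp_mult_coeff N B Q n) t"
  unfolding exp_mult_coeff_def eval_rat_poly_sum
  by (subst fls_mult_nth_bounds[where a = 0 and b = "- int N"])
     (auto simp: assms eval_rat_poly_monom fps_exp_nth of_rat_mult of_rat_divide of_rat_power
        of_rat_fact power_mult_distrib intro!: sum.cong)

lemma phi_fun_expansion:
  assumes "is_basis w"
  obtains Q where "\<And>n. n < - int (length w) \<Longrightarrow> Q $$ n = 0"
    and "\<And>t. has_laurent_expansion_left (phi_fun w m t)
               (fps_to_fls (fps_exp (of_real t * of_nat (beta_sum w))) * fls_of_rat Q)"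
    and "\<And>n. phi_poly w m n = exp_mult_coeff (length w) (beta_sum w) Q n"
proof -
  obtain Q where Q: "\<forall>n < - int (length w). Q $$ n = 0"
    "has_laurent_expansion_left (tuple_series w m 0) (fls_of_rat Q)"
    using rat_laurent_left_tuple_series[OF assms, of m 0] by (auto simp: rat_laurent_left_def)
  define F :: "real \<Rightarrow> complex fls"
    where "F t = fps_to_fls (fps_exp (of_real t * of_nat (beta_sum w))) * fls_of_rat Q" for t
  have F: "has_laurent_expansion_left (phi_fun w m t) (F t)" for t
  proof -
    have "(\<lambda>z. exp (of_real t * of_nat (beta_sum w) * z)) has_laurent_expansion
        fps_to_fls (fps_exp (of_real t * of_nat (beta_sum w)))"
      by (intro has_laurent_expansion_fps has_fps_expansion_exp)
    from has_laurent_expansion_left_mult[OF has_laurent_expansion_imp_left[OF this] Q(2)]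
    show ?thesis
      unfolding F_def by (rule has_laurent_expansion_left_cong) (simp add: phi_fun_eq)
  qed
  moreover have "phi_poly w m n = exp_mult_coeff (length w) (beta_sum w) Q n" for n
    using Q(1) by (intro phi_poly_eqI) (simp add: laurent_coeff_eqI[OF F] F_def fls_exp_mult_nth)
  ultimately show ?thesis
    using Q(1) that unfolding F_def by blast
qed

lemma phi_poly_eq_0:
  "is_basis w \<Longrightarrow> n < - int (length w) \<Longrightarrow> phi_poly w m n = 0"
  by (metis phi_fun_expansion exp_mult_coeff_eq_0)

definition phi_fls :: "word \<Rightarrow> mono \<Rightarrow> real \<Rightarrow> complex fls" where
  "phi_fls w m t = Abs_fls (\<lambda>n. eval_rat_poly (phi_poly w m n) t)"

lemma phi_fls_nth:
  assumes "is_basis w"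
  shows "phi_fls w m t $$ n = eval_rat_poly (phi_poly w m n) t"
  unfolding phi_fls_def
proof (rule nth_Abs_fls)
  show "\<forall>\<^sub>\<infinity>n. eval_rat_poly (phi_poly w m (- int n)) t = 0"
    unfolding MOST_nat using phi_poly_eq_0[OF assms] by (intro exI[of _ "length w"]) simp
qed

lemma has_laurent_expansion_left_phi_fun:
  assumes "is_basis w"
  shows "has_laurent_expansion_left (phi_fun w m t) (phi_fls w m t)"
proof -
  obtain Q where Q: "\<And>n. n < - int (length w) \<Longrightarrow> Q $$ n = 0"
    and F: "has_laurent_expansion_left (phi_fun w m t)
               (fps_to_fls (fps_exp (of_real t * of_nat (beta_sum w))) * fls_of_rat Q)"
    and phi_poly: "\<And>n. phi_poly w m n = exp_mult_coeff (length w) (beta_sum w) Q n"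
    using phi_fun_expansion[OF assms] by metis
  have "phi_fls w m t = fps_to_fls (fps_exp (of_real t * of_nat (beta_sum w))) * fls_of_rat Q"
    by (rule fls_eqI) (simp add: phi_fls_nth[OF assms] phi_poly fls_exp_mult_nth[OF Q])
  with F show ?thesis
    by simp
qed

lemma phi_poly_Nil: "phi_poly [] m n = (if m = 0 \<and> n = 0 then 1 else 0)"
proof (rule phi_poly_eqI)
  fix t :: real
  have "has_laurent_expansion_left (phi_fun [] m t) (fls_const (if m = 0 then 1 else 0))"
    by (rule has_laurent_expansion_left_cong[OF has_laurent_expansion_imp_left[OF
          has_laurent_expansion_const]])
       (simp add: phi_fun_eq tuple_series_Nil)
  then show "laurent_coeff (phi_fun [] m t) n = eval_rat_poly (if m = 0 \<and> n = 0 then 1 else 0) t"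
    by (simp add: laurent_coeff_eqI)
qed

section \<open>The quasi-shuffle identity\<close>

definition tuples_upto :: "word \<Rightarrow> mono \<Rightarrow> nat \<Rightarrow> nat \<Rightarrow> nat list set" where
  "tuples_upto w m a N = {js \<in> tuples_above w m a. \<forall>i\<in>set js. i \<le> N}"

lemma finite_tuples_upto: "finite (tuples_upto w m a N)"
proof (rule finite_subset)
  show "tuples_upto w m a N \<subseteq> {js. set js \<subseteq> {..N} \<and> length js = length w}"
    by (auto simp: tuples_upto_def tuples_above_def)
qed (rule finite_lists_length_eq, simp)

lemma tuples_upto_Cons:
  "tuples_upto (c # w) m a N = (\<lambda>(i, js). i # js) `
     (SIGMA i:{i. a < i \<and> i \<le> N \<and> fst c \<le> Poly_Mapping.lookup m i}.
        tuples_upto w (m - Poly_Mapping.single i (fst c)) i N)"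
  unfolding tuples_upto_def tuples_above_Cons by auto

lemma tuples_upto_tendsto:
  "filterlim (tuples_upto w m a) (finite_subsets_at_top (tuples_above w m a)) sequentially"
  unfolding filterlim_def le_filter_def eventually_filtermap
proof (intro allI impI)
  fix P
  assume "eventually P (finite_subsets_at_top (tuples_above w m a))"
  then obtain X where X: "finite X" "X \<subseteq> tuples_above w m a"
    and P: "\<And>Y. finite Y \<Longrightarrow> X \<subseteq> Y \<Longrightarrow> Y \<subseteq> tuples_above w m a \<Longrightarrow> P Y"
    unfolding eventually_finite_subsets_at_top by metis
  define N0 where "N0 = Max (insert 0 (\<Union>js\<in>X. set js))"
  have "X \<subseteq> tuples_upto w m a N" if "N0 \<le> N" for N
    using X that by (auto simp: tuples_upto_def N0_def intro: order.trans[OF Max_ge])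
  then have "P (tuples_upto w m a N)" if "N0 \<le> N" for N
    using that by (intro P finite_tuples_upto) (auto simp: tuples_upto_def)
  then show "eventually (\<lambda>N. P (tuples_upto w m a N)) sequentially"
    unfolding eventually_sequentially by blast
qed

lemma tuple_sum_tendsto:
  assumes "Re z < 0" and "is_basis w"
  shows "(\<lambda>N. \<Sum>js\<in>tuples_upto w m a N. tuple_weight w js z) \<longlonglongrightarrow> tuple_series w m a z"
  unfolding tuple_series_def
  by (rule filterlim_compose[OF infsum_tendsto[OF tuple_weight_summable[OF assms]]
        tuples_upto_tendsto])

definition tuple_polynomial :: "nat \<Rightarrow> word \<Rightarrow> nat \<Rightarrow> complex \<Rightarrow> (nat, complex) mps" where
  "tuple_polynomial N w a z = Abs_mps (\<lambda>m. \<Sum>js\<in>tuples_upto w m a N. tuple_weight w js z)"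

lemma mps_nth_tuple_polynomial:
  "mps_nth (tuple_polynomial N w a z) m = (\<Sum>js\<in>tuples_upto w m a N. tuple_weight w js z)"
  by (simp add: tuple_polynomial_def Abs_mps_inverse)

lemma tuple_polynomial_Nil: "tuple_polynomial N [] a z = 1"
proof -
  have "tuples_upto [] m a N = (if m = 0 then {[]} else {})" for m
    by (auto simp: tuples_upto_def tuples_above_Nil)
  then show ?thesis
    by (intro mps_eqI) (simp add: mps_nth_tuple_polynomial tuple_weight_def one_mps.rep_eq)
qed

lemma tuple_polynomial_Cons:
  "tuple_polynomial N (c # w) a z = (\<Sum>i\<in>{a<..N}.
     mps_monom (Poly_Mapping.single i (fst c)) (exp (of_nat i * of_nat (snd c) * z))
     * tuple_polynomial N w i z)"
proof (rule mps_eqI)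
  fix m
  define A where "A = {i. a < i \<and> i \<le> N \<and> fst c \<le> Poly_Mapping.lookup m i}"
  define B where "B i = tuples_upto w (m - Poly_Mapping.single i (fst c)) i N" for i
  have "finite A"
    by (rule finite_subset[of _ "{..N}"]) (auto simp: A_def)
  have single_le_iff:
    "(\<exists>y. m = Poly_Mapping.single i (fst c) + y) \<longleftrightarrow> fst c \<le> Poly_Mapping.lookup m i" for i
    by (metis single_add_eq_iff)
  have "mps_nth (tuple_polynomial N (c # w) a z) m
      = (\<Sum>(i, js)\<in>Sigma A B. tuple_weight (c # w) (i # js) z)"
    unfolding mps_nth_tuple_polynomial tuples_upto_Cons A_def[symmetric] B_def[abs_def, symmetric]
    by (subst sum.reindex[OF inj_on_Cons_pair]) (simp add: split_beta)
  also have "\<dots> = (\<Sum>i\<in>A. exp (of_nat i * of_nat (snd c) * z) * mps_nth (tuple_polynomial N w i z)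
      (m - Poly_Mapping.single i (fst c)))"
    by (subst sum.Sigma[symmetric])
       (auto simp: \<open>finite A\<close> B_def finite_tuples_upto mps_nth_tuple_polynomial tuple_weight_Cons
          sum_distrib_left)
  also have "\<dots> = mps_nth (\<Sum>i\<in>{a<..N}. mps_monom (Poly_Mapping.single i (fst c))
      (exp (of_nat i * of_nat (snd c) * z)) * tuple_polynomial N w i z) m"
    by (simp add: mps_nth_sum mps_nth_monom_mult single_le_iff sum.inter_filter[symmetric] A_def
        conj_commute conj_left_commute)
  finally show "mps_nth (tuple_polynomial N (c # w) a z) m = mps_nth (\<Sum>i\<in>{a<..N}.
     mps_monom (Poly_Mapping.single i (fst c)) (exp (of_nat i * of_nat (snd c) * z))
     * tuple_polynomial N w i z) m" .
qed

lemma sum_square_split_diagonal: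
  fixes f :: "nat \<Rightarrow> nat \<Rightarrow> 'a::comm_monoid_add"
  shows "(\<Sum>i\<in>{a<..N}. \<Sum>j\<in>{a<..N}. f i j)
    = (\<Sum>i\<in>{a<..N}. \<Sum>j\<in>{i<..N}. f i j) + (\<Sum>j\<in>{a<..N}. \<Sum>i\<in>{j<..N}. f i j)
      + (\<Sum>i\<in>{a<..N}. f i i)"
proof -
  have row: "(\<Sum>j\<in>{a<..N}. f i j) = (\<Sum>j\<in>{i<..N}. f i j) + (\<Sum>j\<in>{a<..<i}. f i j) + f i i"
    if "i \<in> {a<..N}" for i
  proof -
    have "{a<..N} = insert i ({i<..N} \<union> {a<..<i})"
      using that by auto
    moreover have "{i<..N} \<inter> {a<..<i} = {}"
      by auto
    ultimately show ?thesis
      by (simp add: sum.union_disjoint add_ac)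
  qed
  have "(\<Sum>i\<in>{a<..N}. \<Sum>j\<in>{a<..<i}. f i j) = (\<Sum>i\<in>{a<..N}. \<Sum>j\<in>{j\<in>{a<..N}. j < i}. f i j)"
    by (intro sum.cong) auto
  also have "\<dots> = (\<Sum>j\<in>{a<..N}. \<Sum>i\<in>{i\<in>{a<..N}. j < i}. f i j)"
    by (rule sum.swap_restrict) simp_all
  also have "\<dots> = (\<Sum>j\<in>{a<..N}. \<Sum>i\<in>{j<..N}. f i j)"
    by (intro sum.cong) auto
  finally show ?thesis
    by (simp add: row sum.distrib add_ac)
qed

lemma sum_sum_list_swap:
  "(\<Sum>i\<in>A. \<Sum>w\<leftarrow>ws. f i w) = (\<Sum>w\<leftarrow>ws. \<Sum>i\<in>A. f i w :: 'a::comm_monoid_add)"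
  by (induction ws) (simp_all add: sum.distrib)

text \<open>The three kinds of terms of the quasi-shuffle product correspond to the first index of
  the left factor being smaller than, larger than or equal to that of the right factor.\<close>
theorem tuple_polynomial_qsh:
  "tuple_polynomial N u a z * tuple_polynomial N v a z = qsum (\<lambda>w. tuple_polynomial N w a z) u v"
proof (induction u v arbitrary: a rule: qsh.induct)
  case (3 c u d v)
  let ?G = "\<lambda>w i. tuple_polynomial N w i z"
  define x where
    "x c i = mps_monom (Poly_Mapping.single i (fst c)) (exp (of_nat i * of_nat (snd c) * z))" for c i
  define f where "f i j = (x c i * ?G u i) * (x d j * ?G v j)" for i j
  have G_Cons: "?G (e # w) i = (\<Sum>j\<in>{i<..N}. x e j * ?G w j)" for e w i
    by (simp add: tuple_polynomial_Cons x_def)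
  have x_mult: "x c i * x d i = x (col_add c d) i" for i
    by (simp add: x_def mps_monom_mult_monom col_add_def single_add algebra_simps flip: exp_add)
  have "?G (c # u) a * ?G (d # v) a
      = (\<Sum>i\<in>{a<..N}. \<Sum>j\<in>{i<..N}. f i j) + (\<Sum>j\<in>{a<..N}. \<Sum>i\<in>{j<..N}. f i j)
        + (\<Sum>i\<in>{a<..N}. f i i)"
    unfolding G_Cons sum_product f_def by (rule sum_square_split_diagonal)
  also have "(\<Sum>i\<in>{a<..N}. \<Sum>j\<in>{i<..N}. f i j) = (\<Sum>w\<leftarrow>qsh u (d # v). ?G (c # w) a)"
  proof -
    have "(\<Sum>i\<in>{a<..N}. \<Sum>j\<in>{i<..N}. f i j) = (\<Sum>i\<in>{a<..N}. x c i * (?G u i * ?G (d # v) i))"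
      by (simp add: f_def G_Cons sum_distrib_left mult_ac)
    also have "\<dots> = (\<Sum>i\<in>{a<..N}. \<Sum>w\<leftarrow>qsh u (d # v). x c i * ?G w i)"
      by (simp add: "3.IH"(1) sum_list_const_mult)
    finally show ?thesis
      by (simp add: sum_sum_list_swap G_Cons)
  qed
  also have "(\<Sum>j\<in>{a<..N}. \<Sum>i\<in>{j<..N}. f i j) = (\<Sum>w\<leftarrow>qsh (c # u) v. ?G (d # w) a)"
  proof -
    have "(\<Sum>j\<in>{a<..N}. \<Sum>i\<in>{j<..N}. f i j) = (\<Sum>j\<in>{a<..N}. x d j * (?G (c # u) j * ?G v j))"
      by (simp add: f_def G_Cons sum_distrib_left sum_distrib_right mult_ac)
    also have "\<dots> = (\<Sum>j\<in>{a<..N}. \<Sum>w\<leftarrow>qsh (c # u) v. x d j * ?G w j)"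
      by (simp add: "3.IH"(2) sum_list_const_mult)
    finally show ?thesis
      by (simp add: sum_sum_list_swap G_Cons)
  qed
  also have "(\<Sum>i\<in>{a<..N}. f i i) = (\<Sum>w\<leftarrow>qsh u v. ?G (col_add c d # w) a)"
  proof -
    have "(\<Sum>i\<in>{a<..N}. f i i) = (\<Sum>i\<in>{a<..N}. x (col_add c d) i * (?G u i * ?G v i))"
      by (simp add: f_def mult_ac flip: x_mult)
    also have "\<dots> = (\<Sum>i\<in>{a<..N}. \<Sum>w\<leftarrow>qsh u v. x (col_add c d) i * ?G w i)"
      by (simp add: "3.IH"(3) sum_list_const_mult)
    finally show ?thesis
      by (simp add: sum_sum_list_swap G_Cons)
  qed
  finally show ?case
    by (simp add: comp_def)
qed (simp_all add: tuple_polynomial_Nil)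

lemma tendsto_sum_list:
  fixes f :: "'b \<Rightarrow> 'c \<Rightarrow> 'a::topological_monoid_add"
  shows "(\<And>x. x \<in> set xs \<Longrightarrow> (f x \<longlongrightarrow> l x) F) \<Longrightarrow> ((\<lambda>n. \<Sum>x\<leftarrow>xs. f x n) \<longlongrightarrow> (\<Sum>x\<leftarrow>xs. l x)) F"
  by (induction xs) (auto intro!: tendsto_add)

lemma tuple_series_qsh:
  assumes "Re z < 0" and "is_basis u" and "is_basis v"
  shows "(\<Sum>p\<in>mono_splits m. tuple_series u (fst p) a z * tuple_series v (snd p) a z)
    = (\<Sum>w\<leftarrow>qsh u v. tuple_series w m a z)"
proof -
  let ?T = "\<lambda>w m N. \<Sum>js\<in>tuples_upto w m a N. tuple_weight w js z"
  have "(\<Sum>p\<in>mono_splits m. ?T u (fst p) N * ?T v (snd p) N) = (\<Sum>w\<leftarrow>qsh u v. ?T w m N)" for N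
    using arg_cong[OF tuple_polynomial_qsh[of N u a z v], of "\<lambda>F. mps_nth F m"]
    by (simp add: times_mps.rep_eq mps_nth_sum_list mps_nth_tuple_polynomial)
  moreover have "(\<lambda>N. \<Sum>p\<in>mono_splits m. ?T u (fst p) N * ?T v (snd p) N) \<longlonglongrightarrow>
      (\<Sum>p\<in>mono_splits m. tuple_series u (fst p) a z * tuple_series v (snd p) a z)"
    by (intro tendsto_sum tendsto_mult tuple_sum_tendsto assms)
  moreover have "(\<lambda>N. \<Sum>w\<leftarrow>qsh u v. ?T w m N) \<longlonglongrightarrow> (\<Sum>w\<leftarrow>qsh u v. tuple_series w m a z)"
    by (intro tendsto_sum_list tuple_sum_tendsto assms(1) is_basis_qsh[OF assms(2,3)])
  ultimately show ?thesis
    using LIMSEQ_unique by simp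
qed

lemma phi_fun_qsh:
  assumes "Re z < 0" and "is_basis u" and "is_basis v"
  shows "(\<Sum>p\<in>mono_splits m. phi_fun u (fst p) t z * phi_fun v (snd p) t z)
    = (\<Sum>w\<leftarrow>qsh u v. phi_fun w m t z)"
proof -
  define E where "E w = exp (of_real t * of_nat (beta_sum w) * z)" for w
  have E: "E w = E u * E v" if "w \<in> set (qsh u v)" for w
    using beta_sum_qsh[OF that] by (simp add: E_def algebra_simps flip: exp_add)
  have "(\<Sum>p\<in>mono_splits m. phi_fun u (fst p) t z * phi_fun v (snd p) t z)
      = E u * E v * (\<Sum>p\<in>mono_splits m. tuple_series u (fst p) 0 z * tuple_series v (snd p) 0 z)"
    by (simp add: phi_fun_eq sum_distrib_left E_def mult_ac)
  also have "\<dots> = (\<Sum>w\<leftarrow>qsh u v. phi_fun w m t z)"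
    by (simp add: tuple_series_qsh[OF assms] phi_fun_eq sum_list_const_mult[symmetric] E
        flip: E_def cong: map_cong)
  finally show ?thesis .
qed

lemma phi_fls_qsh:
  assumes "is_basis u" and "is_basis v"
  shows "(\<Sum>p\<in>mono_splits m. phi_fls u (fst p) t * phi_fls v (snd p) t)
    = (\<Sum>w\<leftarrow>qsh u v. phi_fls w m t)"
proof (rule has_laurent_expansion_left_unique)
  show "has_laurent_expansion_left (\<lambda>z. \<Sum>w\<leftarrow>qsh u v. phi_fun w m t z) (\<Sum>w\<leftarrow>qsh u v. phi_fls w m t)"
    by (intro has_laurent_expansion_left_sum_list has_laurent_expansion_left_phi_fun
        is_basis_qsh[OF assms])
  have "has_laurent_expansion_left
      (\<lambda>z. \<Sum>p\<in>mono_splits m. phi_fun u (fst p) t z * phi_fun v (snd p) t z)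
      (\<Sum>p\<in>mono_splits m. phi_fls u (fst p) t * phi_fls v (snd p) t)"
    by (intro has_laurent_expansion_left_sum has_laurent_expansion_left_mult
        has_laurent_expansion_left_phi_fun assms)
  then show "has_laurent_expansion_left (\<lambda>z. \<Sum>w\<leftarrow>qsh u v. phi_fun w m t z)
      (\<Sum>p\<in>mono_splits m. phi_fls u (fst p) t * phi_fls v (snd p) t)"
    by (rule has_laurent_expansion_left_cong) (simp add: phi_fun_qsh assms)
qed

section \<open>Renormalization of basis elements\<close>

definition phi_series :: "word \<Rightarrow> (nat, rat poly) mps fls" where
  "phi_series w = Abs_fls (\<lambda>n. Abs_mps (\<lambda>m. phi_poly w m n))"

lemma mps_nth_phi_series:
  assumes "is_basis w"
  shows "mps_nth (phi_series w $$ n) m = phi_poly w m n"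
proof -
  have "phi_series w $$ n = Abs_mps (\<lambda>m. phi_poly w m n)"
    unfolding phi_series_def
  proof (rule nth_Abs_fls)
    have "Abs_mps (\<lambda>m. phi_poly w m (- int n)) = 0" if "length w < n" for n
      using that phi_poly_eq_0[OF assms] by (simp add: zero_mps_def)
    then show "\<forall>\<^sub>\<infinity>n. Abs_mps (\<lambda>m. phi_poly w m (- int n)) = 0"
      unfolding MOST_nat by blast
  qed
  then show ?thesis
    by (simp add: Abs_mps_inverse)
qed

lemma phi_series_nth_eq_0: "is_basis w \<Longrightarrow> n < - int (length w) \<Longrightarrow> phi_series w $$ n = 0"
  by (rule mps_eqI) (simp add: mps_nth_phi_series phi_poly_eq_0 zero_mps.rep_eq)

lemma phi_series_Nil: "phi_series [] = 1"
  by (intro fls_eqI mps_eqI)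
     (simp add: mps_nth_phi_series is_basis_def phi_poly_Nil one_mps.rep_eq zero_mps.rep_eq)

lemma phi_series_mult:
  assumes "is_basis u" and "is_basis v"
  shows "phi_series u * phi_series v = qsum phi_series u v"
proof (intro fls_eqI mps_eqI)
  fix n m
  let ?I = "{- int (length u)..n + int (length v)}"
  let ?P = "\<Sum>i\<in>?I. \<Sum>p\<in>mono_splits m. phi_poly u (fst p) i * phi_poly v (snd p) (n - i)"
  note nth_mult = fls_mult_nth_bounds[where a = "- int (length u)" and b = "- int (length v)"]
  have "mps_nth ((phi_series u * phi_series v) $$ n) m = ?P"
    by (simp add: nth_mult phi_series_nth_eq_0 assms mps_nth_sum times_mps.rep_eq
        mps_nth_phi_series)
  also have "?P = (\<Sum>w\<leftarrow>qsh u v. phi_poly w m n)"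
  proof (rule eval_rat_poly_eqI)
    fix t :: real
    have "eval_rat_poly ?P t
        = (\<Sum>p\<in>mono_splits m. \<Sum>i\<in>?I. phi_fls u (fst p) t $$ i * phi_fls v (snd p) t $$ (n - i))"
      by (simp add: eval_rat_poly_sum eval_rat_poly_mult phi_fls_nth assms sum.swap[of _ ?I])
    also have "\<dots> = (\<Sum>p\<in>mono_splits m. phi_fls u (fst p) t * phi_fls v (snd p) t) $$ n"
      by (simp add: fls_nth_sum nth_mult phi_fls_nth assms phi_poly_eq_0)
    also have "\<dots> = eval_rat_poly (\<Sum>w\<leftarrow>qsh u v. phi_poly w m n) t"
      using is_basis_qsh[OF assms]
      by (simp add: phi_fls_qsh assms fls_nth_sum_list eval_rat_poly_sum_list phi_fls_nth
          cong: map_cong)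
    finally show "eval_rat_poly ?P t = eval_rat_poly (\<Sum>w\<leftarrow>qsh u v. phi_poly w m n) t" .
  qed
  also have "\<dots> = mps_nth (qsum phi_series u v $$ n) m"
    using is_basis_qsh[OF assms]
    by (simp add: fls_nth_sum_list mps_nth_sum_list mps_nth_phi_series cong: map_cong)
  finally show "mps_nth ((phi_series u * phi_series v) $$ n) m = mps_nth (qsum phi_series u v $$ n) m" .
qed

lemma coeff_sum_list: "coeff (\<Sum>x\<leftarrow>xs. f x) n = (\<Sum>x\<leftarrow>xs. coeff (f x) n)"
  by (induction xs) simp_all

definition lser_of :: "(nat, rat poly) mps fls \<Rightarrow> lser" where
  "lser_of F n m a = coeff (mps_nth (F $$ n) m) a"

lemma xt_mul_coeff:
  "xt_mul (\<lambda>m a. coeff (mps_nth X m) a) (\<lambda>m a. coeff (mps_nth Y m) a)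
   = (\<lambda>m a. coeff (mps_nth (X * Y) m) a)"
  by (simp add: xt_mul_def fun_eq_iff times_mps.rep_eq coeff_sum coeff_mult mono_splits_def)

lemma lser_of_eq_0_iff: "lser_of F n = (\<lambda>_ _. 0) \<longleftrightarrow> F $$ n = 0"
proof
  assume "lser_of F n = (\<lambda>_ _. 0)"
  then have "coeff (mps_nth (F $$ n) m) a = 0" for m a
    by (metis lser_of_def)
  then show "F $$ n = 0"
    by (intro mps_eqI) (simp add: poly_eq_iff zero_mps.rep_eq)
qed (simp add: lser_of_def fun_eq_iff zero_mps.rep_eq)

lemma lser_mul_lser_of: "lser_mul (lser_of F) (lser_of G) = lser_of (F * G)"
proof (intro ext)
  fix n m a
  let ?S = "{i. lser_of F i \<noteq> (\<lambda>_ _. 0) \<and> lser_of G (n - i) \<noteq> (\<lambda>_ _. 0)}"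
  let ?c = "\<lambda>i. coeff (mps_nth (F $$ i * G $$ (n - i)) m) a"
  have "lser_of (F * G) n m a = (\<Sum>i=fls_subdegree F..n - fls_subdegree G. ?c i)"
    by (simp add: lser_of_def fls_times_nth(2) mps_nth_sum coeff_sum)
  also have "\<dots> = (\<Sum>i\<in>?S. ?c i)"
  proof (rule sum.mono_neutral_right)
    show "?S \<subseteq> {fls_subdegree F..n - fls_subdegree G}"
      unfolding lser_of_eq_0_iff using fls_subdegree_leI by fastforce
  qed (auto simp: lser_of_eq_0_iff zero_mps.rep_eq)
  also have "\<dots> = lser_mul (lser_of F) (lser_of G) n m a"
    unfolding lser_mul_def lser_of_def xt_mul_coeff ..
  finally show "lser_mul (lser_of F) (lser_of G) n m a = lser_of (F * G) n m a" ..
qed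

lemma lser_of_1: "lser_of 1 = lser_one"
  by (auto simp: lser_of_def lser_one_def xt_one_def fun_eq_iff one_mps.rep_eq zero_mps.rep_eq)

lemma lser_of_add: "lser_of (F + G) n m a = lser_of F n m a + lser_of G n m a"
  by (simp add: lser_of_def plus_mps.rep_eq)

lemma lser_of_sum: "lser_of (\<Sum>i\<in>A. F i) n m a = (\<Sum>i\<in>A. lser_of (F i) n m a)"
  by (simp add: lser_of_def fls_nth_sum mps_nth_sum coeff_sum)

lemma lser_of_uminus: "lser_of (- F) n m a = - lser_of F n m a"
  by (simp add: lser_of_def uminus_mps.rep_eq)

lemma lser_of_fls_polar: "lser_of (fls_polar F) = polar (lser_of F)"
  by (auto simp: lser_of_def polar_def fun_eq_iff zero_mps.rep_eq)

lemma phi_eq_lser_of: "is_basis w \<Longrightarrow> phi w = lser_of (phi_series w)"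
  by (simp add: fun_eq_iff phi_def lser_of_def mps_nth_phi_series)

lemma renorm_sum_eq_lser_of:
  assumes "is_basis u"
    and "\<And>i. i \<in> {1..<length u} \<Longrightarrow>
      phi_minus (drop i u) = lser_of (counterterm phi_series (drop i u))"
  shows "renorm_sum u = lser_of (bogoliubov phi_series u)"
proof (intro ext)
  fix n m a
  have "lser_mul (phi (take i u)) (phi_minus (drop i u)) n m a
      = lser_of (phi_series (take i u) * counterterm phi_series (drop i u)) n m a"
    if "i \<in> {1..<length u}" for i
    by (simp add: assms(2)[OF that] phi_eq_lser_of[OF is_basis_take[OF assms(1)]] lser_mul_lser_of)
  then show "renorm_sum u n m a = lser_of (bogoliubov phi_series u) n m a"
    by (simp add: renorm_sum_def bogoliubov_def lser_of_add lser_of_sum phi_eq_lser_of[OF assms(1)])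
qed

lemma phi_minus_eq_lser_of: "is_basis u \<Longrightarrow> phi_minus u = lser_of (counterterm phi_series u)"
proof (induction u rule: length_induct)
  case (1 u)
  show ?case
  proof (cases u)
    case Nil
    then show ?thesis
      by (simp add: lser_of_1)
  next
    case (Cons c w)
    have phi_minus_u: "phi_minus u = (\<lambda>n m a. - polar (renorm_sum u) n m a)"
      using Cons by (simp add: renorm_sum_def Let_def)
    have renorm_sum_u: "renorm_sum u = lser_of (bogoliubov phi_series u)"
      using 1 by (intro renorm_sum_eq_lser_of) (auto simp: is_basis_drop)
    have "u \<noteq> []"
      using Cons by simp
    then show ?thesis
      unfolding phi_minus_u renorm_sum_u counterterm_eq[OF \<open>u \<noteq> []\<close>]
      by (simp add: fun_eq_iff lser_of_uminus flip: lser_of_fls_polar)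
  qed
qed

lemma phi_plus_eq_lser_of:
  assumes "is_basis u"
  shows "phi_plus u = lser_of (renormalized phi_series u)"
proof (cases "u = []")
  case False
  have "renorm_sum u = lser_of (bogoliubov phi_series u)"
    using assms by (intro renorm_sum_eq_lser_of) (simp_all add: phi_minus_eq_lser_of is_basis_drop)
  then show ?thesis
    unfolding phi_plus_def renormalized_def if_not_P[OF False] counterterm_eq[OF False]
    by (auto simp: fun_eq_iff lser_of_def plus_mps.rep_eq uminus_mps.rep_eq zero_mps.rep_eq)
qed (simp add: phi_plus_def renormalized_def lser_of_1)

theorem corollary4p2:
  assumes "is_basis u" and "is_basis v"
  shows "xt_mul (Zq u) (Zq v) = Zsum (qsh u v)"
proof -
  let ?R = "renormalized phi_series"
  have mult: "?R u * ?R v = qsum ?R u v"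
    using counterterm_renormalized_mult[OF phi_series_Nil phi_series_mult is_basis_take
        is_basis_drop assms] by blast
  have "(?R u * ?R v) $$ 0 = ?R u $$ 0 * ?R v $$ 0"
    by (simp add: fls_mult_nth_bounds[where a = 0 and b = 0] renormalized_nth_neg)
  then have "xt_mul (Zq u) (Zq v) = (\<lambda>m a. coeff (mps_nth (qsum ?R u v $$ 0) m) a)"
    by (simp add: Zq_def phi_plus_eq_lser_of assms lser_of_def[abs_def] xt_mul_coeff flip: mult)
  also have "\<dots> = Zsum (qsh u v)"
    using is_basis_qsh[OF assms]
    by (simp add: fun_eq_iff Zsum_def Zq_def phi_plus_eq_lser_of lser_of_def fls_nth_sum_list
        mps_nth_sum_list coeff_sum_list cong: map_cong)
  finally show ?thesis .
qed

end
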